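(* Suppose that for every $k\in[K]$ there are positive numbers $I_k,J_k$ such that for every $\epsilon>0$ $$\sum_{n=1}^\infty\mathrm P_k^1\Big(\tfrac{\lambda_k(n)}{n}\le I_k-\epsilon\Big)<\infty,\qquad \sum_{n=1}^\infty\mathrm P_k^0\Big(\tfrac{-\lambda_k(n)}{n}\le J_k-\epsilon\Big)<\infty.$$ Let $A\subseteq[K]$, $i\in A$, $j\notin A$. Then, as $a,b\to\infty$, $$\mathrm E_A[\tilde T_i]\lesssim \frac{a}{I_i},\qquad \mathrm E_A[\tilde T_j]\lesssim\frac{b}{J_j}.$$ If moreover $l,u$ are integers with $0\le l\le u\le K$, $u>0$, $l<K$, and $A\in\Pi_{l,u}$, then: (i) if $l=u$, as $c,d\to\infty$, $$\mathrm E_A[\hat T_i]\lesssim\frac{c}{I_i+\mathcal J_A},\qquad \mathrm E_A[\hat T_j]\lesssim\frac{d}{J_j+\mathcal I_A},\qquad \mathrm E_A[\check T]\lesssim\frac{c\vee d}{\mathcal I_A+\mathcal J_A};$$ (ii) if $l<u$, as $a,b,c,d\to\infty$, $$\mathrm E_A[\hat T_i]\lesssim\begin{cases}\frac{a}{I_i}\wedge\frac{c}{I_i+\mathcal J_A},&|A|=l\\ \frac{a}{I_i},& l<|A|\le u,\end{cases}\qquad \mathrm E_A[\hat T_j]\lesssim\begin{cases}\frac{b}{J_j},& l\le|A|<u\\ \frac{b}{J_j}\wedge\frac{d}{J_j+\mathcal I_A},&|A|=u,\end{cases}$$ and $$\mathrm E_A[\check T]\lesssim\begin{cases}\max\{\frac{b}{\mathcal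 J_A},\ \frac{a}{\mathcal I_A}\wedge\frac{c}{\mathcal I_A+\mathcal J_A}\},&|A|=l\\ \max\{\frac{a}{\mathcal I_A},\frac{b}{\mathcal J_A}\},& l<|A|<u\\ \max\{\frac{a}{\mathcal I_A},\ \frac{b}{\mathcal J_A}\wedge\frac{d}{\mathcal J_A+\mathcal I_A}\},&|A|=u.\end{cases}$$ In particular, if $l<u$ and $a,b,c,d\to\infty$ so that $a\sim c$ and $b\sim d$, then $$\mathrm E_A[\hat T_i]\lesssim\frac{a}{I_i+\mathcal J_A\mathbf 1\{|A|=l\}},\qquad \mathrm E_A[\hat T_j]\lesssim\frac{b}{J_j+\mathcal I_A\mathbf 1\{|A|=u\}},$$ $$\mathrm E_A[\check T]\lesssim\max\Big\{\frac{a}{\mathcal I_A+\mathcal J_A\mathbf 1\{|A|=l\}},\ \frac{b}{\mathcal J_A+\mathcal I_A\mathbf 1\{|A|=u\}}\Big\}.$$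
   Context: Let $K\ge1$, $[K]=\{1,\dots,K\}$, $\mathbb N=\{1,2,\dots\}$. There are $K$ independent data streams $X_k=\{X_k(n):n\in\mathbb N\}$. Let $\mathcal F_k(n)=\sigma(X_k(t):t\le n)$, $\mathcal F(n)=\sigma(\mathcal F_k(n):k\in[K])$. For each $k$, $\mathrm P_k^0,\mathrm P_k^1$ are distributions for $X_k$, mutually absolutely continuous on each $\mathcal F_k(n)$, and $\lambda_k(n)=\log\frac{d\mathrm P_k^1}{d\mathrm P_k^0}(\mathcal F_k(n))$. For $A\subseteq[K]$, $\mathrm P_A$ is the joint law with independent streams, $X_k\sim\mathrm P_k^1$ for $k\in A$ and $X_k\sim\mathrm P_k^0$ for $k\notin A$; $\mathrm E_A$ its expectation. $\mathcal I_A=\min_{i\in A}I_i$, $\mathcal J_A=\min_{j\notin A}J_j$ (minimum over the empty set is $\infty$). $\lambda_{(1)}(n)\ge\dots\ge\lambda_{(K)}(n)$ are the ordered LLRs; $p(n)=|\{k:\lambda_k(n)>0\}|$; when needed $\lambda_{(0)}\equiv+\infty$, $\lambda_{(K+1)}\equiv-\infty$. $\Pi_{l,u}=\{A\subseteq[K]:l\le|A|\le u\}$. Parallel SPRT: $\tilde T_k=\inf\{n:\lambda_k(n)\notin(-b,a)\}$, $a,b>0$. Proposed procedure: $\hat T_k=\hat T_{k,1}\wedge\hat T_{k,2}$ where, if $l=u\equiv m$, $\hat T_{k,1}=\inf\{n:\lambda_k(n)\ge\lambda_{(m+1)}(n)+c\}$, $\hat T_{k,2}=\inf\{n:\lambda_k(n)\le\lambda_{(m)}(n)-d\}$;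 if $l<u$, $\hat T_{k,1}=\inf\{n:\lambda_k(n)\ge\min\{a,\lambda_{(l+1)}(n)+c\}\}$, $\hat T_{k,2}=\inf\{n:\lambda_k(n)\le\max\{-b,\lambda_{(u)}(n)-d\}\}$ (thresholds $a,b,c,d>0$). Synchronous procedure: common decision time $\check T$; if $l=u\equiv m$, $\check T=\inf\{n:\lambda_{(m)}(n)-\lambda_{(m+1)}(n)\ge c\vee d\}$; if $l<u$, $\check T=\tau_1\wedge\tau_2\wedge\tau_3$ with $\tau_1=\inf\{n:\lambda_{(l+1)}(n)\le\min\{-b,-c+\lambda_{(l)}(n)\}\}$, $\tau_2=\inf\{n:\lambda_k(n)\notin(-b,a)\ \forall k,\ l\le p(n)\le u\}$, $\tau_3=\inf\{n:\lambda_{(u)}(n)\ge\max\{a,d+\lambda_{(u+1)}(n)\}\}$. Notation: $x\lesssim y$ means $\limsup x/y\le1$ in the stated limit; $x\sim y$ means $x/y\to1$. *)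

theory Defs
  imports "HOL-Probability.Probability"
begin

text \<open>Path space of a single data stream with observation space M (time index 1,2,...; coordinate 0 unused).\<close>
definition path_space :: "'a measure \<Rightarrow> (nat \<Rightarrow> 'a) measure" where
  "path_space M = PiM UNIV (\<lambda>_::nat. M)"

text \<open>Natural filtration F_k(n) = sigma(X_k(t) : 1 <= t <= n) on the path space.\<close>
definition obs_filtration :: "'a measure \<Rightarrow> nat \<Rightarrow> (nat \<Rightarrow> 'a) measure" where
  "obs_filtration M n =
     vimage_algebra (space (path_space M)) (\<lambda>\<omega>. restrict \<omega> {1..n}) (PiM {1..n} (\<lambda>_. M))"

text \<open>lam n is (a version of) log dP1/dP0 restricted to F(n), for every n >= 1.\<close>
definition is_llr :: "'a measure \<Rightarrow> (nat \<Rightarrow> 'a) measure \<Rightarrow> (nat \<Rightarrow> 'a) measure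
                      \<Rightarrow> (nat \<Rightarrow> (nat \<Rightarrow> 'a) \<Rightarrow> real) \<Rightarrow> bool" where
  "is_llr M P0 P1 lam \<longleftrightarrow>
     (\<forall>n\<ge>1. lam n \<in> borel_measurable (obs_filtration M n) \<and>
        (\<forall>E\<in>sets (obs_filtration M n).
            emeasure P1 E = (\<integral>\<^sup>+\<omega>\<in>E. ennreal (exp (lam n \<omega>)) \<partial>P0)))"

text \<open>Joint law P_A of the K independent streams (a point of the sample space is the
  family of paths omega k, k in [K]).\<close>
definition joint_law :: "nat \<Rightarrow> (nat \<Rightarrow> (nat \<Rightarrow> 'a) measure) \<Rightarrow> (nat \<Rightarrow> (nat \<Rightarrow> 'a) measure)
                         \<Rightarrow> nat set \<Rightarrow> (nat \<Rightarrow> nat \<Rightarrow> 'a) measure" where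
  "joint_law K P0 P1 A = PiM {1..K} (\<lambda>k. if k \<in> A then P1 k else P0 k)"

definition expect_time :: "(nat \<Rightarrow> nat \<Rightarrow> 'a) measure \<Rightarrow> ((nat \<Rightarrow> nat \<Rightarrow> 'a) \<Rightarrow> enat) \<Rightarrow> ennreal" where
  "expect_time P T = (\<integral>\<^sup>+\<omega>. ennreal_of_enat (T \<omega>) \<partial>P)"

definition hit_time :: "(nat \<Rightarrow> bool) \<Rightarrow> enat" where
  "hit_time P = (if \<exists>n\<ge>1. P n then enat (LEAST n. 1 \<le> n \<and> P n) else \<infinity>)"

definition llr_vec :: "(nat \<Rightarrow> nat \<Rightarrow> (nat \<Rightarrow> 'a) \<Rightarrow> real) \<Rightarrow> (nat \<Rightarrow> nat \<Rightarrow> 'a) \<Rightarrow> nat \<Rightarrow> nat \<Rightarrow> real" where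
  "llr_vec lam \<omega> n = (\<lambda>k. lam k n (\<omega> k))"

definition ord_llr :: "nat \<Rightarrow> (nat \<Rightarrow> real) \<Rightarrow> nat \<Rightarrow> ereal" where
  "ord_llr K v m = (if m = 0 then \<infinity> else if K < m then -\<infinity>
                    else ereal (rev (sort (map v [1..<Suc K])) ! (m - 1)))"

definition num_pos :: "nat \<Rightarrow> (nat \<Rightarrow> real) \<Rightarrow> nat" where
  "num_pos K v = card {k \<in> {1..K}. v k > 0}"

definition sprt_time :: "(nat \<Rightarrow> nat \<Rightarrow> (nat \<Rightarrow> 'a) \<Rightarrow> real) \<Rightarrow> real \<Rightarrow> real \<Rightarrow> nat
                         \<Rightarrow> (nat \<Rightarrow> nat \<Rightarrow> 'a) \<Rightarrow> enat" where
  "sprt_time lam a b k \<omega> = hit_time (\<lambda>n. lam k n (\<omega> k) \<notin> {-b<..<a})"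

definition hat_time_eq :: "nat \<Rightarrow> nat \<Rightarrow> real \<Rightarrow> real \<Rightarrow> (nat \<Rightarrow> nat \<Rightarrow> (nat \<Rightarrow> 'a) \<Rightarrow> real)
                           \<Rightarrow> nat \<Rightarrow> (nat \<Rightarrow> nat \<Rightarrow> 'a) \<Rightarrow> enat" where
  "hat_time_eq K m c d lam k \<omega> =
     min (hit_time (\<lambda>n. ereal (lam k n (\<omega> k)) \<ge> ord_llr K (llr_vec lam \<omega> n) (m + 1) + ereal c))
         (hit_time (\<lambda>n. ereal (lam k n (\<omega> k)) \<le> ord_llr K (llr_vec lam \<omega> n) m - ereal d))"

definition hat_time_lt :: "nat \<Rightarrow> nat \<Rightarrow> nat \<Rightarrow> real \<Rightarrow> real \<Rightarrow> real \<Rightarrow> real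
                           \<Rightarrow> (nat \<Rightarrow> nat \<Rightarrow> (nat \<Rightarrow> 'a) \<Rightarrow> real)
                           \<Rightarrow> nat \<Rightarrow> (nat \<Rightarrow> nat \<Rightarrow> 'a) \<Rightarrow> enat" where
  "hat_time_lt K l u a b c d lam k \<omega> =
     min (hit_time (\<lambda>n. ereal (lam k n (\<omega> k)) \<ge>
                        min (ereal a) (ord_llr K (llr_vec lam \<omega> n) (l + 1) + ereal c)))
         (hit_time (\<lambda>n. ereal (lam k n (\<omega> k)) \<le>
                        max (ereal (-b)) (ord_llr K (llr_vec lam \<omega> n) u - ereal d)))"

definition check_time_eq :: "nat \<Rightarrow> nat \<Rightarrow> real \<Rightarrow> real \<Rightarrow> (nat \<Rightarrow> nat \<Rightarrow> (nat \<Rightarrow> 'a) \<Rightarrow> real)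
                             \<Rightarrow> (nat \<Rightarrow> nat \<Rightarrow> 'a) \<Rightarrow> enat" where
  "check_time_eq K m c d lam \<omega> =
     hit_time (\<lambda>n. ord_llr K (llr_vec lam \<omega> n) m - ord_llr K (llr_vec lam \<omega> n) (m + 1)
                      \<ge> ereal (max c d))"

definition check_time_lt :: "nat \<Rightarrow> nat \<Rightarrow> nat \<Rightarrow> real \<Rightarrow> real \<Rightarrow> real \<Rightarrow> real
                             \<Rightarrow> (nat \<Rightarrow> nat \<Rightarrow> (nat \<Rightarrow> 'a) \<Rightarrow> real)
                             \<Rightarrow> (nat \<Rightarrow> nat \<Rightarrow> 'a) \<Rightarrow> enat" where
  "check_time_lt K l u a b c d lam \<omega> =
     min (min
       (hit_time (\<lambda>n. ord_llr K (llr_vec lam \<omega> n) (l + 1) \<le>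
                        min (ereal (-b)) (ereal (-c) + ord_llr K (llr_vec lam \<omega> n) l)))
       (hit_time (\<lambda>n. (\<forall>k\<in>{1..K}. lam k n (\<omega> k) \<notin> {-b<..<a}) \<and>
                        l \<le> num_pos K (llr_vec lam \<omega> n) \<and> num_pos K (llr_vec lam \<omega> n) \<le> u)))
       (hit_time (\<lambda>n. ord_llr K (llr_vec lam \<omega> n) u \<ge>
                        max (ereal a) (ereal d + ord_llr K (llr_vec lam \<omega> n) (u + 1))))"

definition min_over :: "(nat \<Rightarrow> real) \<Rightarrow> nat set \<Rightarrow> ereal" where
  "min_over f S = (if S = {} then \<infinity> else ereal (Min (f ` S)))"

text \<open>x \<lesssim> y along filter F: limsup x/y <= 1, i.e. for every eps > 0 eventually x <= (1+eps) y.\<close>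
definition asym_le :: "('x \<Rightarrow> ennreal) \<Rightarrow> ('x \<Rightarrow> ereal) \<Rightarrow> 'x filter \<Rightarrow> bool" where
  "asym_le f g F \<longleftrightarrow> (\<forall>\<epsilon>>0. eventually (\<lambda>x. enn2ereal (f x) \<le> ereal (1 + \<epsilon>) * g x) F)"

end

theory Submission
  imports Defs
begin

(* On the event that at time n every stream is within \<delta> n of its drift, i.e.
   \<lambda>_i(n) > (I_i - \<delta>) n for i \<in> A and -\<lambda>_j(n) > (J_j - \<delta>) n for j \<notin> A, the
   order statistics satisfy \<lambda>_(|A|)(n) \<ge> (\<I>_A - \<delta>) n and \<lambda>_(|A|+1)(n) \<le> -(\<J>_A - \<delta>) n
   and exactly |A| LLRs are positive.  Each stopping rule has therefore stopped at such a
   time as soon as n exceeds threshold/(rate - 2\<delta>), for the rate belonging to its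
   threshold.  A time T that has stopped at every such time n \<ge> n0 is at most n0 + 1 plus
   the number of times at which some stream is off its drift, and the complete convergence
   hypotheses make the expectation of that number finite.  Hence
   E_A[T] \<le> threshold/(rate - 2\<delta>) + O(1), and \<delta> \<rightarrow> 0 gives the first-order bounds. *)

section \<open>Order statistics of a finite family\<close>

lemma length_filter_le_of_nth:
  assumes "\<And>j. p \<le> j \<Longrightarrow> j < length ys \<Longrightarrow> \<not> P (ys ! j)"
  shows "length (filter P ys) \<le> p"
proof -
  have "filter P (drop p ys) = []"
    using assms by (auto simp: filter_empty_conv in_set_conv_nth)
  then have "filter P ys = filter P (take p ys)"
    by (metis append_Nil2 append_take_drop_id filter_append)
  also have "length \<dots> \<le> p"
    using length_filter_le[of P "take p ys"] by simp
  finally show ?thesis .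
qed

lemma Suc_le_length_filter_of_nth:
  assumes "p < length ys" and "\<And>j. j \<le> p \<Longrightarrow> P (ys ! j)"
  shows "Suc p \<le> length (filter P ys)"
proof -
  have "filter P (take (Suc p) ys) = take (Suc p) ys"
    using assms by (auto simp: filter_id_conv in_set_conv_nth)
  then have "Suc p = length (filter P (take (Suc p) ys))"
    using assms(1) by simp
  also have "\<dots> \<le> length (filter P ys)"
    by (metis append_take_drop_id filter_append length_append le_add1)
  finally show ?thesis .
qed

lemma length_filter_rev_sort: "length (filter P (rev (sort xs))) = length (filter P xs)"
  by (simp add: rev_filter[symmetric] filter_sort)

lemma length_filter_map_upt:
  "length (filter P (map v [1..<Suc K])) = card {k \<in> {1..K}. P (v k)}"
proof -
  have "length (filter P (map v [1..<Suc K])) = length (filter (P \<circ> v) [1..<Suc K])"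
    by (simp add: filter_map del: upt_Suc)
  also have "\<dots> = card (set (filter (P \<circ> v) [1..<Suc K]))"
    by (rule distinct_card[symmetric]) (simp del: upt_Suc)
  also have "set (filter (P \<circ> v) [1..<Suc K]) = {k \<in> {1..K}. P (v k)}"
    by auto
  finally show ?thesis .
qed

lemma nth_rev_sort_antimono:
  "i \<le> j \<Longrightarrow> j < length xs \<Longrightarrow> rev (sort xs) ! j \<le> rev (sort xs) ! i"
  by (rule sorted_rev_nth_mono) simp_all

lemma ord_llr_ge:
  fixes v :: "nat \<Rightarrow> real"
  assumes S: "S \<subseteq> {1..K}" "card S = m" "1 \<le> m" and ge: "\<And>k. k \<in> S \<Longrightarrow> t \<le> v k"
  shows "ereal t \<le> ord_llr K v m"
proof -
  define ys where "ys = rev (sort (map v [1..<Suc K]))"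
  have len: "length ys = K"
    by (simp add: ys_def)
  have "S \<subseteq> {k \<in> {1..K}. t \<le> v k}"
    using S ge by auto
  then have "m \<le> card {k \<in> {1..K}. t \<le> v k}"
    using S(2) by (metis (no_types, lifting) card_mono finite_atLeastAtMost finite_subset mem_Collect_eq subsetI)
  also have "\<dots> = length (filter (\<lambda>x. t \<le> x) ys)"
    by (simp only: ys_def length_filter_rev_sort length_filter_map_upt)
  finally have count: "m \<le> length (filter (\<lambda>x. t \<le> x) ys)" .
  then have mK: "m \<le> K"
    using length_filter_le[of _ ys] len by (metis order_trans)
  have "t \<le> ys ! (m - 1)"
  proof (rule ccontr)
    assume "\<not> t \<le> ys ! (m - 1)"
    then have "length (filter (\<lambda>x. t \<le> x) ys) \<le> m - 1"
      using nth_rev_sort_antimono[of "m - 1" _ "map v [1..<Suc K]"]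
      by (intro length_filter_le_of_nth) (force simp: ys_def)
    with count S(3) show False
      by linarith
  qed
  then show ?thesis
    using S(3) mK by (simp add: ord_llr_def ys_def)
qed

lemma ord_llr_Suc_le:
  fixes v :: "nat \<Rightarrow> real"
  assumes S: "S \<subseteq> {1..K}" "card S = m" and le: "\<And>k. k \<in> {1..K} - S \<Longrightarrow> v k \<le> t"
  shows "ord_llr K v (m + 1) \<le> ereal t"
proof (cases "K < m + 1")
  case False
  define ys where "ys = rev (sort (map v [1..<Suc K]))"
  have "{k \<in> {1..K}. t < v k} \<subseteq> S"
    using le by force
  then have "card {k \<in> {1..K}. t < v k} \<le> m"
    using S by (metis card_mono finite_atLeastAtMost finite_subset)
  then have count: "length (filter (\<lambda>x. t < x) ys) \<le> m"
    by (simp only: ys_def length_filter_rev_sort length_filter_map_upt)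
  have "ys ! m \<le> t"
  proof (rule ccontr)
    assume "\<not> ys ! m \<le> t"
    then have "Suc m \<le> length (filter (\<lambda>x. t < x) ys)"
      using False nth_rev_sort_antimono[of _ m "map v [1..<Suc K]"]
      by (intro Suc_le_length_filter_of_nth) (force simp: ys_def)+
    with count show False
      by linarith
  qed
  then show ?thesis
    using False by (simp add: ord_llr_def ys_def)
qed (simp add: ord_llr_def)

lemma num_pos_eq_card:
  fixes v :: "nat \<Rightarrow> real"
  assumes "S \<subseteq> {1..K}" and "\<And>k. k \<in> S \<Longrightarrow> 0 < v k" and "\<And>k. k \<in> {1..K} - S \<Longrightarrow> v k < 0"
  shows "num_pos K v = card S"
proof -
  have "{k \<in> {1..K}. 0 < v k} = S"
    using assms by fastforce
  then show ?thesis
    by (simp add: num_pos_def)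
qed

section \<open>Asymptotic upper bounds\<close>

lemma ereal_divide_pos: "0 < R \<Longrightarrow> ereal t / ereal R = ereal (t / R)"
  by simp

lemma slack_rate_mono:
  "R' \<le> R \<Longrightarrow> \<delta> \<le> \<delta>' \<Longrightarrow> (R' - \<delta>') * real n \<le> (R - \<delta>) * real n"
  by (intro mult_right_mono) auto

lemma divide_shrunk_rate_le:
  fixes m R \<eta> t :: real
  assumes "0 < m" "m \<le> R" "0 < \<eta>" "0 \<le> t"
  shows "0 < R - m * \<eta> / (1 + \<eta>)" and "t / (R - m * \<eta> / (1 + \<eta>)) \<le> (1 + \<eta>) * (t / R)"
proof -
  have "m * \<eta> / (1 + \<eta>) \<le> R * \<eta> / (1 + \<eta>)"
    using assms by (intro divide_right_mono mult_right_mono) auto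
  then have lower: "R / (1 + \<eta>) \<le> R - m * \<eta> / (1 + \<eta>)"
    using assms by (simp add: field_simps)
  moreover have "0 < R / (1 + \<eta>)"
    using assms by simp
  ultimately show "0 < R - m * \<eta> / (1 + \<eta>)"
    by linarith
  have "t / (R - m * \<eta> / (1 + \<eta>)) \<le> t / (R / (1 + \<eta>))"
    by (rule divide_left_mono[OF lower assms(4)])
      (use mult_pos_pos[OF \<open>0 < R - m * \<eta> / (1 + \<eta>)\<close> \<open>0 < R / (1 + \<eta>)\<close>] in simp)
  then show "t / (R - m * \<eta> / (1 + \<eta>)) \<le> (1 + \<eta>) * (t / R)"
    by (simp add: mult.commute)
qed

lemma min_divide_le_scaled:
  fixes x a c R \<eta> :: real
  assumes "0 < R" and "c \<le> (1 + \<eta>) * a"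
  shows "min x (c / R) \<le> (1 + \<eta>) * (a / R)"
  using assms divide_right_mono[OF assms(2), of R] by (simp add: min.coboundedI2)

lemma max_le_scaled_max:
  fixes y z w \<eta> :: real
  assumes "0 \<le> y" "0 \<le> \<eta>" "z \<le> (1 + \<eta>) * w"
  shows "max y z \<le> (1 + \<eta>) * max y w"
  using assms by (simp add: max_mult_distrib_left max.coboundedI1 max.coboundedI2 mult_le_cancel_right1)

lemma asym_le_cong:
  assumes "asym_le f g F" and "eventually P F" and "\<And>x. P x \<Longrightarrow> g x = h x"
  shows "asym_le f h F"
  unfolding asym_le_def
proof (intro allI impI)
  fix \<epsilon> :: real
  assume "0 < \<epsilon>"
  with assms(1) have "\<forall>\<^sub>F x in F. enn2ereal (f x) \<le> ereal (1 + \<epsilon>) * g x"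
    unfolding asym_le_def by blast
  with assms(2) show "\<forall>\<^sub>F x in F. enn2ereal (f x) \<le> ereal (1 + \<epsilon>) * h x"
    by eventually_elim (simp add: assms(3))
qed

lemma asym_le_min:
  assumes "asym_le f g F" and "asym_le f h F"
  shows "asym_le f (\<lambda>x. min (g x) (h x)) F"
  unfolding asym_le_def
proof (intro allI impI)
  fix \<epsilon> :: real
  assume "0 < \<epsilon>"
  with assms have "\<forall>\<^sub>F x in F. enn2ereal (f x) \<le> ereal (1 + \<epsilon>) * g x"
    and "\<forall>\<^sub>F x in F. enn2ereal (f x) \<le> ereal (1 + \<epsilon>) * h x"
    unfolding asym_le_def by auto
  then show "\<forall>\<^sub>F x in F. enn2ereal (f x) \<le> ereal (1 + \<epsilon>) * min (g x) (h x)"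
    by eventually_elim (simp add: min_def)
qed

lemma asym_le_rescale:
  assumes f: "asym_le f (\<lambda>x. ereal (g x)) F"
    and scaled: "\<And>\<eta>. 0 < \<eta> \<Longrightarrow> eventually (\<lambda>x. g x \<le> (1 + \<eta>) * g' x) F"
    and nonneg: "eventually (\<lambda>x. 0 \<le> g' x) F"
  shows "asym_le f (\<lambda>x. ereal (g' x)) F"
  unfolding asym_le_def
proof (intro allI impI)
  fix \<epsilon> :: real
  assume "0 < \<epsilon>"
  define \<eta> where "\<eta> = min \<epsilon> 1 / 3"
  have \<eta>: "0 < \<eta>" "\<eta> \<le> 1 / 3" "3 * \<eta> \<le> \<epsilon>"
    using \<open>0 < \<epsilon>\<close> by (auto simp: \<eta>_def)
  have "(1 + \<eta>) * (1 + \<eta>) = 1 + 2 * \<eta> + \<eta> * \<eta>"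
    by (simp add: algebra_simps)
  moreover have "\<eta> * \<eta> \<le> \<eta>"
    using \<eta> by (simp add: mult_le_cancel_left1)
  ultimately have square: "(1 + \<eta>) * (1 + \<eta>) \<le> 1 + \<epsilon>"
    using \<eta> by linarith
  show "\<forall>\<^sub>F x in F. enn2ereal (f x) \<le> ereal (1 + \<epsilon>) * ereal (g' x)"
    using f[unfolded asym_le_def, rule_format, OF \<eta>(1)] scaled[OF \<eta>(1)] nonneg
  proof eventually_elim
    case (elim x)
    have "(1 + \<eta>) * g x \<le> (1 + \<eta>) * ((1 + \<eta>) * g' x)"
      using elim(2) \<eta> by (intro mult_left_mono) auto
    also have "\<dots> \<le> (1 + \<epsilon>) * g' x"
      using square elim(3) by (simp add: mult.assoc[symmetric] mult_right_mono)
    finally show ?case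
      using elim(1) by (simp add: order_trans)
  qed
qed

lemma asym_le_of_affine_bounds:
  fixes g :: "'x \<Rightarrow> real"
  assumes affine: "\<And>\<eta>. 0 < \<eta> \<Longrightarrow> \<exists>C. eventually (\<lambda>x. enn2ereal (f x) \<le> ereal ((1 + \<eta>) * g x + C)) F"
    and g: "filterlim g at_top F"
  shows "asym_le f (\<lambda>x. ereal (g x)) F"
  unfolding asym_le_def
proof (intro allI impI)
  fix \<epsilon> :: real
  assume "0 < \<epsilon>"
  then obtain C where C: "eventually (\<lambda>x. enn2ereal (f x) \<le> ereal ((1 + \<epsilon> / 2) * g x + C)) F"
    using affine[of "\<epsilon> / 2"] by auto
  moreover have "eventually (\<lambda>x. 2 * C / \<epsilon> \<le> g x) F"
    using g by (simp add: filterlim_at_top)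
  ultimately show "\<forall>\<^sub>F x in F. enn2ereal (f x) \<le> ereal (1 + \<epsilon>) * ereal (g x)"
  proof eventually_elim
    case (elim x)
    then have "(1 + \<epsilon> / 2) * g x + C \<le> (1 + \<epsilon>) * g x"
      using \<open>0 < \<epsilon>\<close> by (simp add: field_simps)
    with elim(1) show ?case
      by (simp add: order_trans)
  qed
qed

lemma eventually_le_mult_of_ratio:
  fixes f g :: "'x \<Rightarrow> real"
  assumes lim: "((\<lambda>x. f x / g x) \<longlongrightarrow> 1) F" and g: "filterlim g at_top F" and "0 < \<eta>"
  shows "eventually (\<lambda>x. g x \<le> (1 + \<eta>) * f x) F"
proof -
  have "1 / (1 + \<eta>) < (1::real)"
    using \<open>0 < \<eta>\<close> by simp
  then have "eventually (\<lambda>x. 1 / (1 + \<eta>) < f x / g x) F"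
    using order_tendstoD(1)[OF lim] by blast
  moreover have "eventually (\<lambda>x. 1 \<le> g x) F"
    using g by (simp add: filterlim_at_top)
  ultimately show ?thesis
  proof eventually_elim
    case (elim x)
    then have "1 / (1 + \<eta>) * g x < f x"
      by (simp add: less_divide_eq)
    then show ?case
      using \<open>0 < \<eta>\<close> by (simp add: field_simps)
  qed
qed

section \<open>Stopping times on the event of LLRs near their drifts\<close>

lemma hit_time_le: "P n \<Longrightarrow> 1 \<le> n \<Longrightarrow> hit_time P \<le> enat n"
  unfolding hit_time_def by (auto intro: Least_le)

(* Order statistics are ereal-valued (\<plusminus>\<infinity> at the indices 0 and K + 1); threshold
   conditions on them are derived from real bounds. *)
lemma ereal_add_le_of_bounds:
  "y \<le> ereal r \<Longrightarrow> ereal s \<le> x \<Longrightarrow> c + r \<le> s \<Longrightarrow> ereal c + y \<le> x"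
  by (cases x; cases y) auto

lemma ereal_le_add_of_bounds:
  "y \<le> ereal r \<Longrightarrow> ereal s \<le> x \<Longrightarrow> r \<le> c + s \<Longrightarrow> y \<le> ereal c + x"
  by (cases x; cases y) auto

lemma ereal_le_diff_of_bounds:
  "y \<le> ereal r \<Longrightarrow> ereal s \<le> x \<Longrightarrow> c + r \<le> s \<Longrightarrow> ereal c \<le> x - y"
  by (cases x; cases y) auto

lemma ennreal_of_enat_le_plus_suminf:
  fixes T :: enat and f :: "nat \<Rightarrow> ennreal"
  assumes hit: "\<And>n. n0 \<le> n \<Longrightarrow> enat (Suc n) < T \<Longrightarrow> 1 \<le> f n"
  shows "ennreal_of_enat T \<le> of_nat (n0 + 1) + (\<Sum>n. f n)"
proof -
  have bound: "of_nat t \<le> of_nat (n0 + 1) + (\<Sum>n. f n)" if "enat t \<le> T" for t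
  proof -
    have "of_nat (t - (n0 + 1)) = (\<Sum>n\<in>{n0..<t - 1}. (1::ennreal))"
      by simp
    also have "\<dots> \<le> (\<Sum>n\<in>{n0..<t - 1}. f n)"
      using that by (intro sum_mono hit) (auto intro: less_le_trans[of _ "enat t"])
    also have "\<dots> \<le> (\<Sum>n. f n)"
      by (rule sum_le_suminf) auto
    finally have "of_nat (n0 + 1) + of_nat (t - (n0 + 1)) \<le> of_nat (n0 + 1) + (\<Sum>n. f n)"
      by (rule add_left_mono)
    moreover have "(of_nat t :: ennreal) \<le> of_nat (n0 + 1) + of_nat (t - (n0 + 1))"
      by (simp only: of_nat_add[symmetric] of_nat_le_iff)
    ultimately show ?thesis
      by (rule order_trans[rotated])
  qed
  show ?thesis
  proof (cases T)
    case (enat t)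
    with bound show ?thesis
      by simp
  next
    case infinity
    then have "(SUP t. of_nat t :: ennreal) \<le> of_nat (n0 + 1) + (\<Sum>n. f n)"
      using bound by (intro SUP_least) simp
    with infinity show ?thesis
      by (simp add: ennreal_SUP_of_nat_eq_top top_unique)
  qed
qed

locale llr_streams =
  fixes K :: nat
    and M :: "nat \<Rightarrow> 'a measure"
    and P0 P1 :: "nat \<Rightarrow> (nat \<Rightarrow> 'a) measure"
    and lam :: "nat \<Rightarrow> nat \<Rightarrow> (nat \<Rightarrow> 'a) \<Rightarrow> real"
    and I J :: "nat \<Rightarrow> real"
    and A :: "nat set"
  assumes K_pos: "K \<ge> 1"
    and P0_prob: "\<And>k. k \<in> {1..K} \<Longrightarrow> prob_space (P0 k)"
    and P1_prob: "\<And>k. k \<in> {1..K} \<Longrightarrow> prob_space (P1 k)"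
    and P0_sets: "\<And>k. k \<in> {1..K} \<Longrightarrow> sets (P0 k) = sets (path_space (M k))"
    and P1_sets: "\<And>k. k \<in> {1..K} \<Longrightarrow> sets (P1 k) = sets (path_space (M k))"
    and llr: "\<And>k. k \<in> {1..K} \<Longrightarrow> is_llr (M k) (P0 k) (P1 k) (lam k)"
    and I_pos: "\<And>k. k \<in> {1..K} \<Longrightarrow> I k > 0"
    and J_pos: "\<And>k. k \<in> {1..K} \<Longrightarrow> J k > 0"
    and I_compl: "\<And>k \<epsilon>. k \<in> {1..K} \<Longrightarrow> \<epsilon> > 0 \<Longrightarrow>
        summable (\<lambda>n. measure (P1 k)
          {\<omega> \<in> space (P1 k). lam k (Suc n) \<omega> / real (Suc n) \<le> I k - \<epsilon>})"
    and J_compl: "\<And>k \<epsilon>. k \<in> {1..K} \<Longrightarrow> \<epsilon> > 0 \<Longrightarrow>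
        summable (\<lambda>n. measure (P0 k)
          {\<omega> \<in> space (P0 k). - lam k (Suc n) \<omega> / real (Suc n) \<le> J k - \<epsilon>})"
    and A_sub: "A \<subseteq> {1..K}"
begin

abbreviation PA :: "(nat \<Rightarrow> nat \<Rightarrow> 'a) measure" where
  "PA \<equiv> joint_law K P0 P1 A"

definition law :: "nat \<Rightarrow> (nat \<Rightarrow> 'a) measure" where
  "law k = (if k \<in> A then P1 k else P0 k)"

lemma PA_eq_PiM_law: "PA = PiM {1..K} law"
  unfolding joint_law_def law_def by simp

lemma prob_space_law: "k \<in> {1..K} \<Longrightarrow> prob_space (law k)"
  unfolding law_def using P0_prob P1_prob by auto

lemma sets_law: "k \<in> {1..K} \<Longrightarrow> sets (law k) = sets (path_space (M k))"
  unfolding law_def using P0_sets P1_sets by auto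

lemma prob_space_PA: "prob_space PA"
  unfolding PA_eq_PiM_law by (rule prob_space_PiM) (rule prob_space_law)

lemma lam_measurable:
  assumes k: "k \<in> {1..K}" and "1 \<le> n"
  shows "lam k n \<in> borel_measurable (law k)"
proof -
  have "sets (obs_filtration (M k) n) \<subseteq> sets (path_space (M k))"
    unfolding obs_filtration_def
  proof (rule sets_image_in_sets)
    show "(\<lambda>\<omega>. restrict \<omega> {1..n}) \<in> path_space (M k) \<rightarrow>\<^sub>M PiM {1..n} (\<lambda>_. M k)"
      unfolding path_space_def by (rule measurable_restrict_subset) simp
  qed simp
  then have "subalgebra (path_space (M k)) (obs_filtration (M k) n)"
    by (simp add: subalgebra_def obs_filtration_def)
  moreover have "lam k n \<in> borel_measurable (obs_filtration (M k) n)"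
    using llr[OF k] \<open>1 \<le> n\<close> unfolding is_llr_def by auto
  ultimately have "lam k n \<in> borel_measurable (path_space (M k))"
    by (rule measurable_from_subalg)
  then show ?thesis
    using sets_law[OF k] measurable_cong_sets by blast
qed

definition off_drift :: "real \<Rightarrow> nat \<Rightarrow> nat \<Rightarrow> (nat \<Rightarrow> 'a) \<Rightarrow> bool" where
  "off_drift \<delta> k n x \<longleftrightarrow>
     (if k \<in> A then lam k n x \<le> (I k - \<delta>) * n else - lam k n x \<le> (J k - \<delta>) * n)"

definition near_drift :: "real \<Rightarrow> nat \<Rightarrow> (nat \<Rightarrow> nat \<Rightarrow> 'a) \<Rightarrow> bool" where
  "near_drift \<delta> n \<omega> \<longleftrightarrow> (\<forall>k\<in>{1..K}. \<not> off_drift \<delta> k n (\<omega> k))"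

lemma off_drift_sets:
  "k \<in> {1..K} \<Longrightarrow> 1 \<le> n \<Longrightarrow> {x \<in> space (law k). off_drift \<delta> k n x} \<in> sets (law k)"
  using lam_measurable[of k n] unfolding off_drift_def by (cases "k \<in> A") auto

lemma off_drift_sets_PA:
  assumes "k \<in> {1..K}" and "1 \<le> n"
  shows "{\<omega> \<in> space PA. off_drift \<delta> k n (\<omega> k)} \<in> sets PA"
  unfolding PA_eq_PiM_law by (rule sets_Collect_single') (use assms off_drift_sets in auto)

lemma emeasure_off_drift:
  assumes k: "k \<in> {1..K}" and "1 \<le> n"
  shows "emeasure PA {\<omega> \<in> space PA. off_drift \<delta> k n (\<omega> k)} =
    emeasure (law k) {x \<in> space (law k). off_drift \<delta> k n x}"
proof -
  have "emeasure (law k) {x \<in> space (law k). off_drift \<delta> k n x} =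
      emeasure (distr PA (law k) (\<lambda>\<omega>. \<omega> k)) {x \<in> space (law k). off_drift \<delta> k n x}"
    using distr_PiM_component[of "{1..K}" law k, OF prob_space_law k] by (simp add: PA_eq_PiM_law)
  also have "\<dots> = emeasure PA {\<omega> \<in> space PA. off_drift \<delta> k n (\<omega> k)}"
    using k off_drift_sets[OF k \<open>1 \<le> n\<close>] unfolding PA_eq_PiM_law
    by (subst emeasure_distr) (auto simp: space_PiM intro!: arg_cong2[where f = emeasure])
  finally show ?thesis ..
qed

lemma summable_off_drift:
  assumes k: "k \<in> {1..K}" and "0 < \<delta>"
  shows "summable (\<lambda>n. measure (law k) {x \<in> space (law k). off_drift \<delta> k (Suc n) x})"
proof (cases "k \<in> A")
  case True
  then have "{x \<in> space (law k). off_drift \<delta> k (Suc n) x} =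
      {\<omega> \<in> space (P1 k). lam k (Suc n) \<omega> / real (Suc n) \<le> I k - \<delta>}" for n
    by (auto simp: law_def off_drift_def pos_divide_le_eq simp del: of_nat_Suc)
  with True I_compl[OF assms] show ?thesis
    by (simp add: law_def)
next
  case False
  then have "{x \<in> space (law k). off_drift \<delta> k (Suc n) x} =
      {\<omega> \<in> space (P0 k). - lam k (Suc n) \<omega> / real (Suc n) \<le> J k - \<delta>}" for n
    by (auto simp: law_def off_drift_def minus_divide_left pos_divide_le_eq
        simp del: of_nat_Suc divide_minus_left)
  with False J_compl[OF assms] show ?thesis
    by (simp add: law_def)
qed

definition drift_violation_mass :: "real \<Rightarrow> real" where
  "drift_violation_mass \<delta> =
     (\<Sum>k\<in>{1..K}. \<Sum>n. measure (law k) {x \<in> space (law k). off_drift \<delta> k (Suc n) x})"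

lemma drift_violation_mass_nonneg: "0 < \<delta> \<Longrightarrow> 0 \<le> drift_violation_mass \<delta>"
  unfolding drift_violation_mass_def
  by (intro sum_nonneg suminf_nonneg summable_off_drift) auto

definition off_drift_count :: "real \<Rightarrow> nat \<Rightarrow> (nat \<Rightarrow> nat \<Rightarrow> 'a) \<Rightarrow> ennreal" where
  "off_drift_count \<delta> n \<omega> = (\<Sum>k\<in>{1..K}. indicator {\<omega> \<in> space PA. off_drift \<delta> k n (\<omega> k)} \<omega>)"

lemma off_drift_count_measurable: "1 \<le> n \<Longrightarrow> off_drift_count \<delta> n \<in> borel_measurable PA"
  unfolding off_drift_count_def
  by (intro borel_measurable_sum borel_measurable_indicator off_drift_sets_PA) auto

lemma one_le_off_drift_count:
  assumes "\<omega> \<in> space PA" and "\<not> near_drift \<delta> n \<omega>"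
  shows "1 \<le> off_drift_count \<delta> n \<omega>"
proof -
  obtain k where k: "k \<in> {1..K}" "off_drift \<delta> k n (\<omega> k)"
    using assms(2) unfolding near_drift_def by blast
  then have "(1::ennreal) = indicator {\<omega> \<in> space PA. off_drift \<delta> k n (\<omega> k)} \<omega>"
    using assms(1) by simp
  also have "\<dots> \<le> off_drift_count \<delta> n \<omega>"
    unfolding off_drift_count_def using k by (intro member_le_sum) auto
  finally show ?thesis .
qed

lemma nn_integral_off_drift_count:
  assumes "1 \<le> n"
  shows "integral\<^sup>N PA (off_drift_count \<delta> n) =
    ennreal (\<Sum>k\<in>{1..K}. measure (law k) {x \<in> space (law k). off_drift \<delta> k n x})"
proof -
  have "integral\<^sup>N PA (off_drift_count \<delta> n) =
      (\<Sum>k\<in>{1..K}. emeasure PA {\<omega> \<in> space PA. off_drift \<delta> k n (\<omega> k)})"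
    unfolding off_drift_count_def using assms
    by (subst nn_integral_sum) (auto intro!: sum.cong nn_integral_indicator borel_measurable_indicator off_drift_sets_PA)
  also have "\<dots> = (\<Sum>k\<in>{1..K}. ennreal (measure (law k) {x \<in> space (law k). off_drift \<delta> k n x}))"
  proof (intro sum.cong refl)
    fix k
    assume k: "k \<in> {1..K}"
    interpret prob_space "law k"
      by (rule prob_space_law[OF k])
    show "emeasure PA {\<omega> \<in> space PA. off_drift \<delta> k n (\<omega> k)} =
        ennreal (measure (law k) {x \<in> space (law k). off_drift \<delta> k n x})"
      using k assms by (simp add: emeasure_off_drift emeasure_eq_measure)
  qed
  finally show ?thesis
    by simp
qed

lemma expect_time_le_drift_violation:
  assumes "0 < \<delta>"
    and stop: "\<And>\<omega> n. \<omega> \<in> space PA \<Longrightarrow> n0 \<le> n \<Longrightarrow> 1 \<le> n \<Longrightarrow> near_drift \<delta> n \<omega> \<Longrightarrow> T \<omega> \<le> enat n"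
  shows "expect_time PA T \<le> of_nat (n0 + 1) + ennreal (drift_violation_mass \<delta>)"
proof -
  have pointwise: "ennreal_of_enat (T \<omega>) \<le> of_nat (n0 + 1) + (\<Sum>n. off_drift_count \<delta> (Suc n) \<omega>)"
    if \<omega>: "\<omega> \<in> space PA" for \<omega>
  proof (rule ennreal_of_enat_le_plus_suminf)
    fix n
    assume "n0 \<le> n" and "enat (Suc n) < T \<omega>"
    then have "\<not> near_drift \<delta> (Suc n) \<omega>"
      using stop[OF \<omega>, of "Suc n"] by fastforce
    then show "1 \<le> off_drift_count \<delta> (Suc n) \<omega>"
      by (rule one_le_off_drift_count[OF \<omega>])
  qed
  have integral_count: "integral\<^sup>N PA (off_drift_count \<delta> (Suc n)) =
      ennreal (\<Sum>k\<in>{1..K}. measure (law k) {x \<in> space (law k). off_drift \<delta> k (Suc n) x})" for n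
    by (rule nn_integral_off_drift_count) simp
  have "expect_time PA T \<le> (\<integral>\<^sup>+\<omega>. of_nat (n0 + 1) + (\<Sum>n. off_drift_count \<delta> (Suc n) \<omega>) \<partial>PA)"
    unfolding expect_time_def by (rule nn_integral_mono) (rule pointwise)
  also have "\<dots> = of_nat (n0 + 1) + (\<Sum>n. integral\<^sup>N PA (off_drift_count \<delta> (Suc n)))"
    using off_drift_count_measurable prob_space.emeasure_space_1[OF prob_space_PA]
    by (simp add: nn_integral_add nn_integral_suminf borel_measurable_suminf_order)
  also have "(\<Sum>n. integral\<^sup>N PA (off_drift_count \<delta> (Suc n))) = ennreal (drift_violation_mass \<delta>)"
    unfolding integral_count drift_violation_mass_def using summable_off_drift[OF _ \<open>0 < \<delta>\<close>]
    by (subst suminf_sum[symmetric]) (auto intro!: suminf_ennreal2 sum_nonneg summable_sum)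
  finally show ?thesis .
qed

lemma expect_time_le_of_stop_after:
  assumes "0 < \<delta>" and stop: "\<And>\<omega> n. 1 \<le> n \<Longrightarrow> r \<le> real n \<Longrightarrow> near_drift \<delta> n \<omega> \<Longrightarrow> T \<omega> \<le> enat n"
  shows "enn2ereal (expect_time PA T) \<le> ereal (max r 0 + 2 + drift_violation_mass \<delta>)"
proof -
  define n0 where "n0 = nat \<lceil>max r 0\<rceil>"
  have n0: "r \<le> real n0" "real n0 \<le> max r 0 + 1"
    unfolding n0_def by linarith+
  have "expect_time PA T \<le> of_nat (n0 + 1) + ennreal (drift_violation_mass \<delta>)"
    using \<open>0 < \<delta>\<close> by (rule expect_time_le_drift_violation) (use n0 stop in force)
  also have "\<dots> = ennreal (real (n0 + 1)) + ennreal (drift_violation_mass \<delta>)"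
    by (simp only: ennreal_of_nat_eq_real_of_nat)
  also have "\<dots> = ennreal (real (n0 + 1) + drift_violation_mass \<delta>)"
    by (rule ennreal_plus[symmetric, OF of_nat_0_le_iff drift_violation_mass_nonneg[OF \<open>0 < \<delta>\<close>]])
  finally have "enn2ereal (expect_time PA T) \<le> enn2ereal (ennreal (real (n0 + 1) + drift_violation_mass \<delta>))"
    by (simp only: less_eq_ennreal.rep_eq)
  also have "\<dots> = ereal (real (n0 + 1) + drift_violation_mass \<delta>)"
    using drift_violation_mass_nonneg[OF \<open>0 < \<delta>\<close>] by (intro enn2ereal_ennreal) simp
  also have "\<dots> \<le> ereal (max r 0 + 2 + drift_violation_mass \<delta>)"
    using n0(2) by simp
  finally show ?thesis .
qed

definition min_rate :: real where
  "min_rate = min (Min (I ` {1..K})) (Min (J ` {1..K}))"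

(* Real counterparts of min_over I A and min_over J ({1..K} - A); Min of the empty set is
   unspecified, so they are only used when the index set is nonempty. *)
definition I_A :: real where
  "I_A = Min (I ` A)"

definition J_A :: real where
  "J_A = Min (J ` ({1..K} - A))"

lemma min_rate_pos: "0 < min_rate"
  using K_pos I_pos J_pos unfolding min_rate_def by (auto simp: Min_gr_iff)

lemma min_rate_le_I: "k \<in> {1..K} \<Longrightarrow> min_rate \<le> I k"
  unfolding min_rate_def by (simp add: min.coboundedI1)

lemma min_rate_le_J: "k \<in> {1..K} \<Longrightarrow> min_rate \<le> J k"
  unfolding min_rate_def by (simp add: min.coboundedI2)

lemma finite_A: "finite A"
  using A_sub finite_subset by blast

lemma I_A_le: "k \<in> A \<Longrightarrow> I_A \<le> I k"
  unfolding I_A_def using finite_A by simp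

lemma J_A_le: "k \<in> {1..K} - A \<Longrightarrow> J_A \<le> J k"
  unfolding J_A_def by simp

lemma min_rate_le_I_A: "A \<noteq> {} \<Longrightarrow> min_rate \<le> I_A"
  unfolding I_A_def using finite_A A_sub min_rate_le_I by (subst Min_ge_iff) auto

lemma min_rate_le_J_A: "{1..K} - A \<noteq> {} \<Longrightarrow> min_rate \<le> J_A"
  unfolding J_A_def using min_rate_le_J by (subst Min_ge_iff) auto

lemma min_over_I_eq: "A \<noteq> {} \<Longrightarrow> min_over I A = ereal I_A"
  unfolding min_over_def I_A_def by simp

lemma min_over_J_eq: "{1..K} - A \<noteq> {} \<Longrightarrow> min_over J ({1..K} - A) = ereal J_A"
  unfolding min_over_def J_A_def by simp

lemma complement_nonempty: "card A < K \<Longrightarrow> {1..K} - A \<noteq> {}"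
  using A_sub by (metis Diff_eq_empty_iff card_atLeastAtMost diff_Suc_1 nat_less_le subset_antisym)

lemma I_pos_of_mem: "i \<in> A \<Longrightarrow> 0 < I i"
  using A_sub I_pos by auto

lemma I_A_pos: "A \<noteq> {} \<Longrightarrow> 0 < I_A"
  using min_rate_le_I_A min_rate_pos by fastforce

lemma J_A_pos: "{1..K} - A \<noteq> {} \<Longrightarrow> 0 < J_A"
  using min_rate_le_J_A min_rate_pos by fastforce

(* The slack 2\<delta> leaves room for thresholds on a difference of two statistics, e.g.
   \<lambda>_(m) - \<lambda>_(m+1), where the lags of both drifts add up. *)
lemma asym_le_expect_time_rates:
  fixes T :: "'x \<Rightarrow> (nat \<Rightarrow> nat \<Rightarrow> 'a) \<Rightarrow> enat" and t1 t2 :: "'x \<Rightarrow> real"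
  assumes R1: "min_rate \<le> R1" and R2: "min_rate \<le> R2"
    and t1: "filterlim t1 at_top F" and t2: "filterlim t2 at_top F"
    and stop: "\<And>x \<omega> n \<delta>. 1 \<le> n \<Longrightarrow> 0 < \<delta> \<Longrightarrow> 2 * \<delta> < min_rate \<Longrightarrow> near_drift \<delta> n \<omega> \<Longrightarrow>
        t1 x \<le> (R1 - 2 * \<delta>) * n \<Longrightarrow> t2 x \<le> (R2 - 2 * \<delta>) * n \<Longrightarrow> T x \<omega> \<le> enat n"
  shows "asym_le (\<lambda>x. expect_time PA (T x)) (\<lambda>x. ereal (max (t1 x / R1) (t2 x / R2))) F"
proof (rule asym_le_of_affine_bounds)
  have R_pos: "0 < R1" "0 < R2"
    using R1 R2 min_rate_pos by linarith+
  have "filterlim (\<lambda>x. t1 x * (1 / R1)) at_top F"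
    using R_pos by (intro filterlim_at_top_mult_tendsto_pos[OF tendsto_const _ t1]) simp
  then show "filterlim (\<lambda>x. max (t1 x / R1) (t2 x / R2)) at_top F"
    by (rule filterlim_at_top_mono) simp
  fix \<eta> :: real
  assume \<eta>: "0 < \<eta>"
  \<comment> \<open>small enough that every rate R \<ge> min_rate shrinks by at most the factor 1 + \<eta>\<close>
  define \<delta> where "\<delta> = min_rate * \<eta> / (2 * (1 + \<eta>))"
  have shrink: "2 * \<delta> = min_rate * \<eta> / (1 + \<eta>)"
    using \<eta> by (simp add: \<delta>_def field_simps)
  have \<delta>: "0 < \<delta>" "2 * \<delta> < min_rate"
    using \<eta> min_rate_pos by (auto simp: \<delta>_def shrink field_simps)
  have "eventually (\<lambda>x. 0 \<le> t1 x \<and> 0 \<le> t2 x) F"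
    using t1 t2 unfolding filterlim_at_top by (intro eventually_conj) auto
  then have "eventually (\<lambda>x. enn2ereal (expect_time PA (T x)) \<le>
      ereal ((1 + \<eta>) * max (t1 x / R1) (t2 x / R2) + (2 + drift_violation_mass \<delta>))) F"
  proof eventually_elim
    case (elim x)
    define r where "r = max (t1 x / (R1 - 2 * \<delta>)) (t2 x / (R2 - 2 * \<delta>))"
    have slack: "0 < R1 - 2 * \<delta>" "0 < R2 - 2 * \<delta>"
      and scaled: "t1 x / (R1 - 2 * \<delta>) \<le> (1 + \<eta>) * (t1 x / R1)" "t2 x / (R2 - 2 * \<delta>) \<le> (1 + \<eta>) * (t2 x / R2)"
      unfolding shrink using divide_shrunk_rate_le[OF min_rate_pos _ \<eta>] R1 R2 elim by auto
    have E: "enn2ereal (expect_time PA (T x)) \<le> ereal (max r 0 + 2 + drift_violation_mass \<delta>)"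
    proof (rule expect_time_le_of_stop_after[OF \<delta>(1)])
      fix \<omega> n
      assume "1 \<le> n" "r \<le> real n" "near_drift \<delta> n \<omega>"
      moreover have "t1 x \<le> (R1 - 2 * \<delta>) * n" "t2 x \<le> (R2 - 2 * \<delta>) * n"
        using \<open>r \<le> real n\<close> slack by (auto simp: r_def pos_divide_le_eq mult.commute)
      ultimately show "T x \<omega> \<le> enat n"
        using stop \<delta> by blast
    qed
    have "max r 0 \<le> (1 + \<eta>) * max (t1 x / R1) (t2 x / R2)"
      using scaled elim \<eta> R_pos by (auto simp: r_def max_mult_distrib_left le_max_iff_disj)
    then have "ereal (max r 0 + 2 + drift_violation_mass \<delta>) \<le>
        ereal ((1 + \<eta>) * max (t1 x / R1) (t2 x / R2) + (2 + drift_violation_mass \<delta>))"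
      by simp
    with E show ?case
      by (rule order_trans)
  qed
  then show "\<exists>C. eventually (\<lambda>x. enn2ereal (expect_time PA (T x)) \<le>
      ereal ((1 + \<eta>) * max (t1 x / R1) (t2 x / R2) + C)) F"
    by blast
qed

lemma asym_le_expect_time_rate:
  fixes T :: "'x \<Rightarrow> (nat \<Rightarrow> nat \<Rightarrow> 'a) \<Rightarrow> enat" and t :: "'x \<Rightarrow> real"
  assumes "min_rate \<le> R" and "filterlim t at_top F"
    and "\<And>x \<omega> n \<delta>. 1 \<le> n \<Longrightarrow> 0 < \<delta> \<Longrightarrow> 2 * \<delta> < min_rate \<Longrightarrow> near_drift \<delta> n \<omega> \<Longrightarrow>
        t x \<le> (R - 2 * \<delta>) * n \<Longrightarrow> T x \<omega> \<le> enat n"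
  shows "asym_le (\<lambda>x. expect_time PA (T x)) (\<lambda>x. ereal (t x / R)) F"
  using asym_le_expect_time_rates[OF assms(1,1,2,2)] assms(3) by simp

context
  fixes \<delta> :: real and n :: nat and \<omega> :: "nat \<Rightarrow> nat \<Rightarrow> 'a"
  assumes near: "near_drift \<delta> n \<omega>"
begin

lemma lam_ge_of_near_drift: "i \<in> A \<Longrightarrow> (I i - \<delta>) * n \<le> lam i n (\<omega> i)"
  using near A_sub unfolding near_drift_def off_drift_def by force

lemma lam_le_of_near_drift: "j \<in> {1..K} - A \<Longrightarrow> lam j n (\<omega> j) \<le> - ((J j - \<delta>) * n)"
  using near unfolding near_drift_def off_drift_def by force

lemma ord_llr_card_ge:
  assumes "A \<noteq> {}"
  shows "ereal ((I_A - \<delta>) * n) \<le> ord_llr K (llr_vec lam \<omega> n) (card A)"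
proof (rule ord_llr_ge[OF A_sub refl])
  show "1 \<le> card A"
    using assms finite_A by (simp add: Suc_le_eq card_gt_0_iff)
  fix k
  assume "k \<in> A"
  then show "(I_A - \<delta>) * n \<le> llr_vec lam \<omega> n k"
    using lam_ge_of_near_drift[of k] slack_rate_mono[OF I_A_le order_refl, of k \<delta> n]
    unfolding llr_vec_def by linarith
qed

lemma ord_llr_Suc_card_le:
  "ord_llr K (llr_vec lam \<omega> n) (card A + 1) \<le> ereal (- ((J_A - \<delta>) * n))"
proof (rule ord_llr_Suc_le[OF A_sub refl])
  fix k
  assume "k \<in> {1..K} - A"
  then show "llr_vec lam \<omega> n k \<le> - ((J_A - \<delta>) * n)"
    using lam_le_of_near_drift[of k] slack_rate_mono[OF J_A_le order_refl, of k \<delta> n]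
    unfolding llr_vec_def by linarith
qed

lemma num_pos_of_near_drift:
  assumes "1 \<le> n" and "\<delta> < min_rate"
  shows "num_pos K (llr_vec lam \<omega> n) = card A"
proof (rule num_pos_eq_card[OF A_sub])
  have pos: "0 < (min_rate - \<delta>) * n"
    using assms by simp
  fix k
  show "0 < llr_vec lam \<omega> n k" if "k \<in> A"
  proof -
    have "(min_rate - \<delta>) * n \<le> (I k - \<delta>) * n"
      using min_rate_le_I[of k] that A_sub by (intro mult_right_mono) auto
    then show ?thesis
      using lam_ge_of_near_drift[OF that] pos unfolding llr_vec_def by linarith
  qed
  show "llr_vec lam \<omega> n k < 0" if "k \<in> {1..K} - A"
  proof -
    have "(min_rate - \<delta>) * n \<le> (J k - \<delta>) * n"
      using min_rate_le_J[of k] that by (intro mult_right_mono) auto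
    then show ?thesis
      using lam_le_of_near_drift[OF that] pos unfolding llr_vec_def by linarith
  qed
qed

end

section \<open>The stopping rules\<close>

lemma asym_le_sprt_time_in:
  assumes i: "i \<in> A" and fa: "filterlim fa at_top F"
  shows "asym_le (\<lambda>x. expect_time PA (sprt_time lam (fa x) (fb x) i)) (\<lambda>x. ereal (fa x / I i)) F"
proof (rule asym_le_expect_time_rate[OF min_rate_le_I fa])
  show "i \<in> {1..K}"
    using i A_sub by auto
  fix x \<omega> n \<delta>
  assume n: "1 \<le> n" and "0 < \<delta>" and near: "near_drift \<delta> n \<omega>" and a: "fa x \<le> (I i - 2 * \<delta>) * n"
  have "fa x \<le> (I i - \<delta>) * n"
    using \<open>0 < \<delta>\<close> by (intro order_trans[OF a slack_rate_mono]) auto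
  then have "lam i n (\<omega> i) \<notin> {- fb x<..<fa x}"
    using lam_ge_of_near_drift[OF near i] by simp
  then show "sprt_time lam (fa x) (fb x) i \<omega> \<le> enat n"
    unfolding sprt_time_def using n by (rule hit_time_le)
qed

lemma asym_le_sprt_time_out:
  assumes j: "j \<in> {1..K} - A" and fb: "filterlim fb at_top F"
  shows "asym_le (\<lambda>x. expect_time PA (sprt_time lam (fa x) (fb x) j)) (\<lambda>x. ereal (fb x / J j)) F"
proof (rule asym_le_expect_time_rate[OF min_rate_le_J fb])
  show "j \<in> {1..K}"
    using j by auto
  fix x \<omega> n \<delta>
  assume n: "1 \<le> n" and "0 < \<delta>" and near: "near_drift \<delta> n \<omega>" and b: "fb x \<le> (J j - 2 * \<delta>) * n"
  have "fb x \<le> (J j - \<delta>) * n"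
    using \<open>0 < \<delta>\<close> by (intro order_trans[OF b slack_rate_mono]) auto
  then have "lam j n (\<omega> j) \<notin> {- fb x<..<fa x}"
    using lam_le_of_near_drift[OF near j] by simp
  then show "sprt_time lam (fa x) (fb x) j \<omega> \<le> enat n"
    unfolding sprt_time_def using n by (rule hit_time_le)
qed

lemma asym_le_hat_time_eq_in:
  assumes i: "i \<in> A" and Ac: "{1..K} - A \<noteq> {}" and fc: "filterlim fc at_top F"
  shows "asym_le (\<lambda>x. expect_time PA (hat_time_eq K (card A) (fc x) (fd x) lam i))
    (\<lambda>x. ereal (fc x / (I i + J_A))) F"
proof (rule asym_le_expect_time_rate[OF _ fc])
  show "min_rate \<le> I i + J_A"
    using i A_sub min_rate_le_I[of i] min_rate_le_J_A[OF Ac] min_rate_pos by auto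
  fix x \<omega> n \<delta>
  assume n: "1 \<le> n" and near: "near_drift \<delta> n \<omega>" and c: "fc x \<le> (I i + J_A - 2 * \<delta>) * n"
  have "ereal (fc x) + ord_llr K (llr_vec lam \<omega> n) (card A + 1) \<le> ereal (lam i n (\<omega> i))"
    using c lam_ge_of_near_drift[OF near i]
    by (intro ereal_add_le_of_bounds[OF ord_llr_Suc_card_le[OF near], where s = "lam i n (\<omega> i)"])
      (auto simp: algebra_simps)
  then have "ord_llr K (llr_vec lam \<omega> n) (card A + 1) + ereal (fc x) \<le> ereal (lam i n (\<omega> i))"
    by (simp only: add.commute)
  then show "hat_time_eq K (card A) (fc x) (fd x) lam i \<omega> \<le> enat n"
    unfolding hat_time_eq_def by (rule min.coboundedI1[OF hit_time_le[OF _ n]])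
qed

lemma asym_le_hat_time_eq_out:
  assumes j: "j \<in> {1..K} - A" and An: "A \<noteq> {}" and fd: "filterlim fd at_top F"
  shows "asym_le (\<lambda>x. expect_time PA (hat_time_eq K (card A) (fc x) (fd x) lam j))
    (\<lambda>x. ereal (fd x / (J j + I_A))) F"
proof (rule asym_le_expect_time_rate[OF _ fd])
  show "min_rate \<le> J j + I_A"
    using j min_rate_le_J[of j] min_rate_le_I_A[OF An] min_rate_pos by auto
  fix x \<omega> n \<delta>
  assume n: "1 \<le> n" and near: "near_drift \<delta> n \<omega>" and d: "fd x \<le> (J j + I_A - 2 * \<delta>) * n"
  have "ereal (lam j n (\<omega> j)) \<le> ord_llr K (llr_vec lam \<omega> n) (card A) - ereal (fd x)"
    using d lam_le_of_near_drift[OF near j]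
    by (intro ereal_le_diff_of_bounds[OF order_refl ord_llr_card_ge[OF near An]]) (auto simp: algebra_simps)
  then show "hat_time_eq K (card A) (fc x) (fd x) lam j \<omega> \<le> enat n"
    unfolding hat_time_eq_def by (rule min.coboundedI2[OF hit_time_le[OF _ n]])
qed

lemma asym_le_check_time_eq:
  assumes An: "A \<noteq> {}" and Ac: "{1..K} - A \<noteq> {}"
    and fc: "filterlim fc at_top F" and fd: "filterlim fd at_top F"
  shows "asym_le (\<lambda>x. expect_time PA (check_time_eq K (card A) (fc x) (fd x) lam))
    (\<lambda>x. ereal (max (fc x) (fd x) / (I_A + J_A))) F"
proof (rule asym_le_expect_time_rate)
  show "min_rate \<le> I_A + J_A"
    using min_rate_le_I_A[OF An] min_rate_le_J_A[OF Ac] min_rate_pos by auto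
  show "filterlim (\<lambda>x. max (fc x) (fd x)) at_top F"
    using fc by (rule filterlim_at_top_mono) simp
  fix x \<omega> n \<delta>
  assume n: "1 \<le> n" and near: "near_drift \<delta> n \<omega>"
    and cd: "max (fc x) (fd x) \<le> (I_A + J_A - 2 * \<delta>) * n"
  have "ereal (max (fc x) (fd x)) \<le>
      ord_llr K (llr_vec lam \<omega> n) (card A) - ord_llr K (llr_vec lam \<omega> n) (card A + 1)"
    using cd
    by (intro ereal_le_diff_of_bounds[OF ord_llr_Suc_card_le[OF near] ord_llr_card_ge[OF near An]])
      (simp add: algebra_simps)
  then show "check_time_eq K (card A) (fc x) (fd x) lam \<omega> \<le> enat n"
    unfolding check_time_eq_def by (rule hit_time_le[OF _ n])
qed

lemma asym_le_hat_time_lt_in: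
  assumes i: "i \<in> A" and fa: "filterlim fa at_top F"
  shows "asym_le (\<lambda>x. expect_time PA (hat_time_lt K l u (fa x) (fb x) (fc x) (fd x) lam i))
    (\<lambda>x. ereal (fa x / I i)) F"
proof (rule asym_le_expect_time_rate[OF min_rate_le_I fa])
  show "i \<in> {1..K}"
    using i A_sub by auto
  fix x \<omega> n \<delta>
  assume n: "1 \<le> n" and "0 < \<delta>" and near: "near_drift \<delta> n \<omega>" and a: "fa x \<le> (I i - 2 * \<delta>) * n"
  have "fa x \<le> (I i - \<delta>) * n"
    using \<open>0 < \<delta>\<close> by (intro order_trans[OF a slack_rate_mono]) auto
  then have "ereal (fa x) \<le> ereal (lam i n (\<omega> i))"
    using lam_ge_of_near_drift[OF near i] by simp
  then have "min (ereal (fa x)) (ord_llr K (llr_vec lam \<omega> n) (l + 1) + ereal (fc x)) \<le> ereal (lam i n (\<omega> i))"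
    by (rule min.coboundedI1)
  then show "hat_time_lt K l u (fa x) (fb x) (fc x) (fd x) lam i \<omega> \<le> enat n"
    unfolding hat_time_lt_def by (rule min.coboundedI1[OF hit_time_le[OF _ n]])
qed

lemma asym_le_hat_time_lt_in_lower:
  assumes i: "i \<in> A" and l: "card A = l" and Ac: "{1..K} - A \<noteq> {}" and fc: "filterlim fc at_top F"
  shows "asym_le (\<lambda>x. expect_time PA (hat_time_lt K l u (fa x) (fb x) (fc x) (fd x) lam i))
    (\<lambda>x. ereal (fc x / (I i + J_A))) F"
proof (rule asym_le_expect_time_rate[OF _ fc])
  show "min_rate \<le> I i + J_A"
    using i A_sub min_rate_le_I[of i] min_rate_le_J_A[OF Ac] min_rate_pos by auto
  fix x \<omega> n \<delta>
  assume n: "1 \<le> n" and near: "near_drift \<delta> n \<omega>" and c: "fc x \<le> (I i + J_A - 2 * \<delta>) * n"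
  have "ereal (fc x) + ord_llr K (llr_vec lam \<omega> n) (card A + 1) \<le> ereal (lam i n (\<omega> i))"
    using c lam_ge_of_near_drift[OF near i]
    by (intro ereal_add_le_of_bounds[OF ord_llr_Suc_card_le[OF near], where s = "lam i n (\<omega> i)"])
      (auto simp: algebra_simps)
  then have "min (ereal (fa x)) (ord_llr K (llr_vec lam \<omega> n) (l + 1) + ereal (fc x)) \<le> ereal (lam i n (\<omega> i))"
    unfolding l by (simp only: add.commute min.coboundedI2)
  then show "hat_time_lt K l u (fa x) (fb x) (fc x) (fd x) lam i \<omega> \<le> enat n"
    unfolding hat_time_lt_def by (rule min.coboundedI1[OF hit_time_le[OF _ n]])
qed

lemma asym_le_hat_time_lt_out:
  assumes j: "j \<in> {1..K} - A" and fb: "filterlim fb at_top F"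
  shows "asym_le (\<lambda>x. expect_time PA (hat_time_lt K l u (fa x) (fb x) (fc x) (fd x) lam j))
    (\<lambda>x. ereal (fb x / J j)) F"
proof (rule asym_le_expect_time_rate[OF min_rate_le_J fb])
  show "j \<in> {1..K}"
    using j by auto
  fix x \<omega> n \<delta>
  assume n: "1 \<le> n" and "0 < \<delta>" and near: "near_drift \<delta> n \<omega>" and b: "fb x \<le> (J j - 2 * \<delta>) * n"
  have "fb x \<le> (J j - \<delta>) * n"
    using \<open>0 < \<delta>\<close> by (intro order_trans[OF b slack_rate_mono]) auto
  then have "ereal (lam j n (\<omega> j)) \<le> ereal (- fb x)"
    using lam_le_of_near_drift[OF near j] by simp
  then have "ereal (lam j n (\<omega> j)) \<le> max (ereal (- fb x)) (ord_llr K (llr_vec lam \<omega> n) u - ereal (fd x))"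
    by (rule max.coboundedI1)
  then show "hat_time_lt K l u (fa x) (fb x) (fc x) (fd x) lam j \<omega> \<le> enat n"
    unfolding hat_time_lt_def by (rule min.coboundedI2[OF hit_time_le[OF _ n]])
qed

lemma asym_le_hat_time_lt_out_upper:
  assumes j: "j \<in> {1..K} - A" and u: "card A = u" and An: "A \<noteq> {}" and fd: "filterlim fd at_top F"
  shows "asym_le (\<lambda>x. expect_time PA (hat_time_lt K l u (fa x) (fb x) (fc x) (fd x) lam j))
    (\<lambda>x. ereal (fd x / (J j + I_A))) F"
proof (rule asym_le_expect_time_rate[OF _ fd])
  show "min_rate \<le> J j + I_A"
    using j min_rate_le_J[of j] min_rate_le_I_A[OF An] min_rate_pos by auto
  fix x \<omega> n \<delta>
  assume n: "1 \<le> n" and near: "near_drift \<delta> n \<omega>" and d: "fd x \<le> (J j + I_A - 2 * \<delta>) * n"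
  have "ereal (lam j n (\<omega> j)) \<le> ord_llr K (llr_vec lam \<omega> n) (card A) - ereal (fd x)"
    using d lam_le_of_near_drift[OF near j]
    by (intro ereal_le_diff_of_bounds[OF order_refl ord_llr_card_ge[OF near An]]) (auto simp: algebra_simps)
  then have "ereal (lam j n (\<omega> j)) \<le> max (ereal (- fb x)) (ord_llr K (llr_vec lam \<omega> n) u - ereal (fd x))"
    unfolding u by (rule max.coboundedI2)
  then show "hat_time_lt K l u (fa x) (fb x) (fc x) (fd x) lam j \<omega> \<le> enat n"
    unfolding hat_time_lt_def by (rule min.coboundedI2[OF hit_time_le[OF _ n]])
qed

lemma check_time_lt_le_of_signs:
  assumes near: "near_drift \<delta> n \<omega>" and n: "1 \<le> n" and "0 \<le> \<delta>" "\<delta> < min_rate"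
    and "l \<le> card A" "card A \<le> u"
    and a: "A \<noteq> {} \<Longrightarrow> a \<le> (I_A - 2 * \<delta>) * n" and b: "{1..K} - A \<noteq> {} \<Longrightarrow> b \<le> (J_A - 2 * \<delta>) * n"
  shows "check_time_lt K l u a b c d lam \<omega> \<le> enat n"
proof -
  have "lam k n (\<omega> k) \<notin> {-b<..<a}" if k: "k \<in> {1..K}" for k
  proof (cases "k \<in> A")
    case True
    then have "a \<le> (I_A - 2 * \<delta>) * n"
      using a by blast
    also have "\<dots> \<le> (I k - \<delta>) * n"
      using I_A_le[OF True] \<open>0 \<le> \<delta>\<close> by (intro slack_rate_mono) auto
    also have "\<dots> \<le> lam k n (\<omega> k)"
      using lam_ge_of_near_drift[OF near True] .
    finally show ?thesis
      by simp
  next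
    case False
    with k have k': "k \<in> {1..K} - A"
      by simp
    then have "b \<le> (J_A - 2 * \<delta>) * n"
      using b by blast
    also have "\<dots> \<le> (J k - \<delta>) * n"
      using J_A_le[OF k'] \<open>0 \<le> \<delta>\<close> by (intro slack_rate_mono) auto
    finally show ?thesis
      using lam_le_of_near_drift[OF near k'] by simp
  qed
  moreover have "num_pos K (llr_vec lam \<omega> n) = card A"
    using num_pos_of_near_drift[OF near] assms by simp
  ultimately have "(\<forall>k\<in>{1..K}. lam k n (\<omega> k) \<notin> {-b<..<a}) \<and>
      l \<le> num_pos K (llr_vec lam \<omega> n) \<and> num_pos K (llr_vec lam \<omega> n) \<le> u"
    using assms by simp
  then show ?thesis
    unfolding check_time_lt_def by (rule min.coboundedI1[OF min.coboundedI2[OF hit_time_le[OF _ n]]])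
qed

lemma check_time_lt_le_of_gap_lower:
  assumes near: "near_drift \<delta> n \<omega>" and n: "1 \<le> n" and "0 \<le> \<delta>" and l: "card A = l" and An: "A \<noteq> {}"
    and b: "b \<le> (J_A - 2 * \<delta>) * n" and c: "c \<le> (I_A + J_A - 2 * \<delta>) * n"
  shows "check_time_lt K l u a b c d lam \<omega> \<le> enat n"
proof -
  have upper: "ord_llr K (llr_vec lam \<omega> n) (l + 1) \<le> ereal (- ((J_A - \<delta>) * n))"
    using ord_llr_Suc_card_le[OF near] l by simp
  have lower: "ereal ((I_A - \<delta>) * n) \<le> ord_llr K (llr_vec lam \<omega> n) l"
    using ord_llr_card_ge[OF near An] l by simp
  have "- ((J_A - \<delta>) * n) \<le> - b"
    using \<open>0 \<le> \<delta>\<close> order_trans[OF b slack_rate_mono, of J_A \<delta>] by simp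
  with upper have "ord_llr K (llr_vec lam \<omega> n) (l + 1) \<le> ereal (- b)"
    by (metis ereal_less_eq(3) order_trans)
  moreover have "ord_llr K (llr_vec lam \<omega> n) (l + 1) \<le> ereal (- c) + ord_llr K (llr_vec lam \<omega> n) l"
    using c by (intro ereal_le_add_of_bounds[OF upper lower]) (simp add: algebra_simps)
  ultimately have "ord_llr K (llr_vec lam \<omega> n) (l + 1) \<le>
      min (ereal (- b)) (ereal (- c) + ord_llr K (llr_vec lam \<omega> n) l)"
    by simp
  then show ?thesis
    unfolding check_time_lt_def by (rule min.coboundedI1[OF min.coboundedI1[OF hit_time_le[OF _ n]]])
qed

lemma check_time_lt_le_of_gap_upper:
  assumes near: "near_drift \<delta> n \<omega>" and n: "1 \<le> n" and "0 \<le> \<delta>" and u: "card A = u" and An: "A \<noteq> {}"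
    and a: "a \<le> (I_A - 2 * \<delta>) * n" and d: "d \<le> (I_A + J_A - 2 * \<delta>) * n"
  shows "check_time_lt K l u a b c d lam \<omega> \<le> enat n"
proof -
  have upper: "ord_llr K (llr_vec lam \<omega> n) (u + 1) \<le> ereal (- ((J_A - \<delta>) * n))"
    using ord_llr_Suc_card_le[OF near] u by simp
  have lower: "ereal ((I_A - \<delta>) * n) \<le> ord_llr K (llr_vec lam \<omega> n) u"
    using ord_llr_card_ge[OF near An] u by simp
  have "a \<le> (I_A - \<delta>) * n"
    using \<open>0 \<le> \<delta>\<close> order_trans[OF a slack_rate_mono, of I_A \<delta>] by simp
  with lower have "ereal a \<le> ord_llr K (llr_vec lam \<omega> n) u"
    by (metis ereal_less_eq(3) order_trans)
  moreover have "ereal d + ord_llr K (llr_vec lam \<omega> n) (u + 1) \<le> ord_llr K (llr_vec lam \<omega> n) u"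
    using d by (intro ereal_add_le_of_bounds[OF upper lower]) (simp add: algebra_simps)
  ultimately have "max (ereal a) (ereal d + ord_llr K (llr_vec lam \<omega> n) (u + 1)) \<le>
      ord_llr K (llr_vec lam \<omega> n) u"
    by simp
  then show ?thesis
    unfolding check_time_lt_def by (rule min.coboundedI2[OF hit_time_le[OF _ n]])
qed

lemma asym_le_check_time_lt_signs:
  assumes "l \<le> card A" "card A \<le> u" and An: "A \<noteq> {}" and Ac: "{1..K} - A \<noteq> {}"
    and fa: "filterlim fa at_top F" and fb: "filterlim fb at_top F"
  shows "asym_le (\<lambda>x. expect_time PA (check_time_lt K l u (fa x) (fb x) (fc x) (fd x) lam))
    (\<lambda>x. ereal (max (fa x / I_A) (fb x / J_A))) F"
proof (rule asym_le_expect_time_rates[OF min_rate_le_I_A[OF An] min_rate_le_J_A[OF Ac] fa fb])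
  fix x \<omega> n \<delta>
  assume "1 \<le> n" "0 < \<delta>" "2 * \<delta> < min_rate" "near_drift \<delta> n \<omega>"
    "fa x \<le> (I_A - 2 * \<delta>) * n" "fb x \<le> (J_A - 2 * \<delta>) * n"
  then show "check_time_lt K l u (fa x) (fb x) (fc x) (fd x) lam \<omega> \<le> enat n"
    using assms by (intro check_time_lt_le_of_signs) auto
qed

lemma asym_le_check_time_lt_empty:
  assumes "l \<le> card A" "card A \<le> u" and A: "A = {}" and fb: "filterlim fb at_top F"
  shows "asym_le (\<lambda>x. expect_time PA (check_time_lt K l u (fa x) (fb x) (fc x) (fd x) lam))
    (\<lambda>x. ereal (fb x / J_A)) F"
proof (rule asym_le_expect_time_rate[OF min_rate_le_J_A fb])
  show "{1..K} - A \<noteq> {}"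
    using A K_pos by auto
  fix x \<omega> n \<delta>
  assume "1 \<le> n" "0 < \<delta>" "2 * \<delta> < min_rate" "near_drift \<delta> n \<omega>" "fb x \<le> (J_A - 2 * \<delta>) * n"
  then show "check_time_lt K l u (fa x) (fb x) (fc x) (fd x) lam \<omega> \<le> enat n"
    using assms by (intro check_time_lt_le_of_signs) auto
qed

lemma asym_le_check_time_lt_full:
  assumes "l \<le> card A" "card A \<le> u" and Ac: "{1..K} - A = {}" and fa: "filterlim fa at_top F"
  shows "asym_le (\<lambda>x. expect_time PA (check_time_lt K l u (fa x) (fb x) (fc x) (fd x) lam))
    (\<lambda>x. ereal (fa x / I_A)) F"
proof (rule asym_le_expect_time_rate[OF min_rate_le_I_A fa])
  show "A \<noteq> {}"
    using Ac K_pos by auto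
  fix x \<omega> n \<delta>
  assume "1 \<le> n" "0 < \<delta>" "2 * \<delta> < min_rate" "near_drift \<delta> n \<omega>" "fa x \<le> (I_A - 2 * \<delta>) * n"
  then show "check_time_lt K l u (fa x) (fb x) (fc x) (fd x) lam \<omega> \<le> enat n"
    using assms by (intro check_time_lt_le_of_signs) auto
qed

lemma asym_le_check_time_lt_gap_lower:
  assumes l: "card A = l" and An: "A \<noteq> {}" and Ac: "{1..K} - A \<noteq> {}"
    and fb: "filterlim fb at_top F" and fc: "filterlim fc at_top F"
  shows "asym_le (\<lambda>x. expect_time PA (check_time_lt K l u (fa x) (fb x) (fc x) (fd x) lam))
    (\<lambda>x. ereal (max (fb x / J_A) (fc x / (I_A + J_A)))) F"
proof (rule asym_le_expect_time_rates[OF min_rate_le_J_A[OF Ac] _ fb fc])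
  show "min_rate \<le> I_A + J_A"
    using min_rate_le_I_A[OF An] min_rate_le_J_A[OF Ac] min_rate_pos by auto
  fix x \<omega> n \<delta>
  assume "1 \<le> n" "0 < \<delta>" "near_drift \<delta> n \<omega>"
    "fb x \<le> (J_A - 2 * \<delta>) * n" "fc x \<le> (I_A + J_A - 2 * \<delta>) * n"
  then show "check_time_lt K l u (fa x) (fb x) (fc x) (fd x) lam \<omega> \<le> enat n"
    using l An by (intro check_time_lt_le_of_gap_lower) auto
qed

lemma asym_le_check_time_lt_gap_upper:
  assumes u: "card A = u" and An: "A \<noteq> {}" and Ac: "{1..K} - A \<noteq> {}"
    and fa: "filterlim fa at_top F" and fd: "filterlim fd at_top F"
  shows "asym_le (\<lambda>x. expect_time PA (check_time_lt K l u (fa x) (fb x) (fc x) (fd x) lam))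
    (\<lambda>x. ereal (max (fa x / I_A) (fd x / (I_A + J_A)))) F"
proof (rule asym_le_expect_time_rates[OF min_rate_le_I_A[OF An] _ fa fd])
  show "min_rate \<le> I_A + J_A"
    using min_rate_le_I_A[OF An] min_rate_le_J_A[OF Ac] min_rate_pos by auto
  fix x \<omega> n \<delta>
  assume "1 \<le> n" "0 < \<delta>" "near_drift \<delta> n \<omega>"
    "fa x \<le> (I_A - 2 * \<delta>) * n" "fd x \<le> (I_A + J_A - 2 * \<delta>) * n"
  then show "check_time_lt K l u (fa x) (fb x) (fc x) (fd x) lam \<omega> \<le> enat n"
    using u An by (intro check_time_lt_le_of_gap_upper) auto
qed

lemma asym_le_check_time_lt_lower:
  assumes l: "card A = l" "l \<le> u" and An: "A \<noteq> {}" and Ac: "{1..K} - A \<noteq> {}"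
    and fa: "filterlim fa at_top F" and fb: "filterlim fb at_top F" and fc: "filterlim fc at_top F"
  shows "asym_le (\<lambda>x. expect_time PA (check_time_lt K l u (fa x) (fb x) (fc x) (fd x) lam))
    (\<lambda>x. ereal (max (fb x / J_A) (min (fa x / I_A) (fc x / (I_A + J_A))))) F"
proof -
  have "l \<le> card A" "card A \<le> u"
    using l by simp_all
  from asym_le_min[OF asym_le_check_time_lt_signs[OF this An Ac fa fb]
      asym_le_check_time_lt_gap_lower[OF l(1) An Ac fb fc]]
  show ?thesis
    by (simp add: max_min_distrib2 max.commute[of "ereal (fa _ / I_A)"])
qed

lemma asym_le_check_time_lt_upper:
  assumes u: "card A = u" "l \<le> u" and An: "A \<noteq> {}" and Ac: "{1..K} - A \<noteq> {}"
    and fa: "filterlim fa at_top F" and fb: "filterlim fb at_top F" and fd: "filterlim fd at_top F"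
  shows "asym_le (\<lambda>x. expect_time PA (check_time_lt K l u (fa x) (fb x) (fc x) (fd x) lam))
    (\<lambda>x. ereal (max (fa x / I_A) (min (fb x / J_A) (fd x / (I_A + J_A))))) F"
proof -
  have "l \<le> card A" "card A \<le> u"
    using u by simp_all
  from asym_le_min[OF asym_le_check_time_lt_signs[OF this An Ac fa fb]
      asym_le_check_time_lt_gap_upper[OF u(1) An Ac fa fd]]
  show ?thesis
    by (simp add: max_min_distrib2)
qed

lemma asym_le_check_time_lt_lower_proportional:
  assumes l: "card A = l" "l \<le> u" and An: "A \<noteq> {}" and Ac: "{1..K} - A \<noteq> {}"
    and fa: "filterlim fa at_top F" and fb: "filterlim fb at_top F" and fc: "filterlim fc at_top F"
    and ac: "((\<lambda>x. fa x / fc x) \<longlongrightarrow> 1) F"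
  shows "asym_le (\<lambda>x. expect_time PA (check_time_lt K l u (fa x) (fb x) (fc x) (fd x) lam))
    (\<lambda>x. ereal (max (fa x / (I_A + J_A)) (fb x / J_A))) F"
proof (rule asym_le_rescale[OF asym_le_check_time_lt_lower[OF l An Ac fa fb fc]])
  have R: "0 < I_A + J_A" and J: "0 < J_A"
    using I_A_pos[OF An] J_A_pos[OF Ac] by simp_all
  have nonneg: "eventually (\<lambda>x. 0 \<le> fa x \<and> 0 \<le> fb x) F"
    using fa fb unfolding filterlim_at_top by (intro eventually_conj) auto
  then show "eventually (\<lambda>x. 0 \<le> max (fa x / (I_A + J_A)) (fb x / J_A)) F"
    by eventually_elim (use J in \<open>simp add: le_max_iff_disj\<close>)
  fix \<eta> :: real
  assume "0 < \<eta>"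
  from eventually_le_mult_of_ratio[OF ac fc this] nonneg
  show "eventually (\<lambda>x. max (fb x / J_A) (min (fa x / I_A) (fc x / (I_A + J_A))) \<le>
      (1 + \<eta>) * max (fa x / (I_A + J_A)) (fb x / J_A)) F"
  proof eventually_elim
    case (elim x)
    have "max (fb x / J_A) (min (fa x / I_A) (fc x / (I_A + J_A))) \<le> (1 + \<eta>) * max (fb x / J_A) (fa x / (I_A + J_A))"
      using elim J \<open>0 < \<eta>\<close> by (intro max_le_scaled_max min_divide_le_scaled[OF R]) auto
    then show ?case
      by (simp add: max.commute)
  qed
qed

lemma asym_le_check_time_lt_upper_proportional:
  assumes u: "card A = u" "l \<le> u" and An: "A \<noteq> {}" and Ac: "{1..K} - A \<noteq> {}"
    and fa: "filterlim fa at_top F" and fb: "filterlim fb at_top F" and fd: "filterlim fd at_top F"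
    and bd: "((\<lambda>x. fb x / fd x) \<longlongrightarrow> 1) F"
  shows "asym_le (\<lambda>x. expect_time PA (check_time_lt K l u (fa x) (fb x) (fc x) (fd x) lam))
    (\<lambda>x. ereal (max (fa x / I_A) (fb x / (I_A + J_A)))) F"
proof (rule asym_le_rescale[OF asym_le_check_time_lt_upper[OF u An Ac fa fb fd]])
  have R: "0 < I_A + J_A" and I: "0 < I_A"
    using I_A_pos[OF An] J_A_pos[OF Ac] by simp_all
  have nonneg: "eventually (\<lambda>x. 0 \<le> fa x) F"
    using fa unfolding filterlim_at_top by auto
  then show "eventually (\<lambda>x. 0 \<le> max (fa x / I_A) (fb x / (I_A + J_A))) F"
    by eventually_elim (use I in \<open>simp add: le_max_iff_disj\<close>)
  fix \<eta> :: real
  assume "0 < \<eta>"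
  from eventually_le_mult_of_ratio[OF bd fd this] nonneg
  show "eventually (\<lambda>x. max (fa x / I_A) (min (fb x / J_A) (fd x / (I_A + J_A))) \<le>
      (1 + \<eta>) * max (fa x / I_A) (fb x / (I_A + J_A))) F"
  proof eventually_elim
    case (elim x)
    then show ?case
      using I \<open>0 < \<eta>\<close> by (intro max_le_scaled_max min_divide_le_scaled[OF R]) auto
  qed
qed

lemma card_A_cases:
  assumes "l \<le> card A" "card A \<le> u" "l < u" "u \<le> K"
  obtains (empty) "A = {}" "card A = l" "{1..K} - A \<noteq> {}"
    | (lower) "card A = l" "A \<noteq> {}" "{1..K} - A \<noteq> {}"
    | (mid) "l < card A" "card A < u" "A \<noteq> {}" "{1..K} - A \<noteq> {}"
    | (full) "card A = u" "card A \<noteq> l" "A \<noteq> {}" "{1..K} - A = {}"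
    | (upper) "card A = u" "card A \<noteq> l" "A \<noteq> {}" "{1..K} - A \<noteq> {}"
proof (cases "A = {}")
  case True
  with empty assms K_pos show ?thesis
    by auto
next
  case An: False
  consider "card A = l" | "l < card A" "card A < u" | "card A = u" "card A \<noteq> l"
    using assms by linarith
  then show ?thesis
  proof cases
    case 1
    with lower An complement_nonempty assms show ?thesis
      by simp
  next
    case 2
    with mid An complement_nonempty assms show ?thesis
      by simp
  next
    case 3
    with full upper An show ?thesis
      by blast
  qed
qed

lemma hat_time_lt_in_bound:
  assumes "l < u" "u \<le> K" and i: "i \<in> A"
    and fa: "filterlim fa at_top F" and fc: "filterlim fc at_top F"
  shows "asym_le (\<lambda>x. expect_time PA (hat_time_lt K l u (fa x) (fb x) (fc x) (fd x) lam i))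
    (\<lambda>x. if card A = l
       then min (ereal (fa x) / ereal (I i)) (ereal (fc x) / (ereal (I i) + min_over J ({1..K} - A)))
       else ereal (fa x) / ereal (I i)) F"
proof (cases "card A = l")
  case True
  then have Ac: "{1..K} - A \<noteq> {}"
    using assms complement_nonempty by simp
  have "0 < I i" "0 < I i + J_A"
    using I_pos_of_mem[OF i] J_A_pos[OF Ac] by simp_all
  with asym_le_min[OF asym_le_hat_time_lt_in[OF i fa] asym_le_hat_time_lt_in_lower[OF i True Ac fc]]
  show ?thesis
    unfolding min_over_J_eq[OF Ac] using True by (simp add: ereal_divide_pos del: ereal_divide)
next
  case False
  with asym_le_hat_time_lt_in[OF i fa] I_pos_of_mem[OF i] show ?thesis
    by (simp add: ereal_divide_pos del: ereal_divide)
qed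

lemma hat_time_lt_out_bound:
  assumes "l < u" and j: "j \<in> {1..K} - A"
    and fb: "filterlim fb at_top F" and fd: "filterlim fd at_top F"
  shows "asym_le (\<lambda>x. expect_time PA (hat_time_lt K l u (fa x) (fb x) (fc x) (fd x) lam j))
    (\<lambda>x. if card A = u
       then min (ereal (fb x) / ereal (J j)) (ereal (fd x) / (ereal (J j) + min_over I A))
       else ereal (fb x) / ereal (J j)) F"
proof (cases "card A = u")
  case True
  then have An: "A \<noteq> {}"
    using \<open>l < u\<close> by auto
  have "0 < J j" "0 < J j + I_A"
    using J_pos[of j] j I_A_pos[OF An] by simp_all
  with asym_le_min[OF asym_le_hat_time_lt_out[OF j fb] asym_le_hat_time_lt_out_upper[OF j True An fd]]
  show ?thesis
    using True by (simp add: min_over_I_eq[OF An] ereal_divide_pos del: ereal_divide)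
next
  case False
  with asym_le_hat_time_lt_out[OF j fb] J_pos[of j] j show ?thesis
    by (simp add: ereal_divide_pos del: ereal_divide)
qed

lemma check_time_lt_bound:
  assumes lu: "l \<le> card A" "card A \<le> u" "l < u" "u \<le> K"
    and fa: "filterlim fa at_top F" and fb: "filterlim fb at_top F"
    and fc: "filterlim fc at_top F" and fd: "filterlim fd at_top F"
  shows "asym_le (\<lambda>x. expect_time PA (check_time_lt K l u (fa x) (fb x) (fc x) (fd x) lam))
    (\<lambda>x. if card A = l then
         max (ereal (fb x) / min_over J ({1..K} - A))
             (min (ereal (fa x) / min_over I A)
                  (ereal (fc x) / (min_over I A + min_over J ({1..K} - A))))
       else if card A < u then
         max (ereal (fa x) / min_over I A) (ereal (fb x) / min_over J ({1..K} - A))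
       else
         max (ereal (fa x) / min_over I A)
             (min (ereal (fb x) / min_over J ({1..K} - A))
                  (ereal (fd x) / (min_over J ({1..K} - A) + min_over I A)))) F"
proof -
  have nonneg: "eventually (\<lambda>x. 0 \<le> fa x \<and> 0 \<le> fb x) F"
    using fa fb unfolding filterlim_at_top by (intro eventually_conj) auto
  from lu show ?thesis
  proof (cases rule: card_A_cases)
    case empty
    have "min_over I A = \<infinity>"
      using empty(1) by (simp add: min_over_def)
    with empty(2) J_A_pos[OF empty(3)] show ?thesis
      unfolding min_over_J_eq[OF empty(3)]
      by (intro asym_le_cong[OF asym_le_check_time_lt_empty[OF lu(1,2) empty(1) fb] nonneg])
        (auto simp: max_def divide_le_0_iff)
  next
    case lower
    with I_A_pos J_A_pos asym_le_check_time_lt_lower[OF lower(1) _ lower(2,3) fa fb fc] lu show ?thesis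
      unfolding min_over_I_eq[OF lower(2)] min_over_J_eq[OF lower(3)]
      by (simp add: ereal_divide_pos del: ereal_divide)
  next
    case mid
    with I_A_pos J_A_pos asym_le_check_time_lt_signs[OF lu(1,2) mid(3,4) fa fb] show ?thesis
      unfolding min_over_I_eq[OF mid(3)] min_over_J_eq[OF mid(4)]
      by (simp add: ereal_divide_pos del: ereal_divide)
  next
    case full
    have "min_over J ({1..K} - A) = \<infinity>"
      using full(4) by (simp add: min_over_def)
    with full(1,2) I_A_pos[OF full(3)] show ?thesis
      unfolding min_over_I_eq[OF full(3)]
      by (intro asym_le_cong[OF asym_le_check_time_lt_full[OF lu(1,2) full(4) fa] nonneg])
        (auto simp: max_def divide_le_0_iff)
  next
    case upper
    with I_A_pos J_A_pos asym_le_check_time_lt_upper[OF upper(1) _ upper(3,4) fa fb fd] lu show ?thesis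
      unfolding min_over_I_eq[OF upper(3)] min_over_J_eq[OF upper(4)]
      by (simp add: ereal_divide_pos add.commute del: ereal_divide)
  qed
qed

lemma hat_time_lt_in_bound_proportional:
  assumes "l < u" "u \<le> K" and i: "i \<in> A"
    and fa: "filterlim fa at_top F" and fc: "filterlim fc at_top F"
    and ac: "((\<lambda>x. fa x / fc x) \<longlongrightarrow> 1) F"
  shows "asym_le (\<lambda>x. expect_time PA (hat_time_lt K l u (fa x) (fb x) (fc x) (fd x) lam i))
    (\<lambda>x. ereal (fa x) / (ereal (I i) + (if card A = l then min_over J ({1..K} - A) else 0))) F"
proof (cases "card A = l")
  case True
  then have Ac: "{1..K} - A \<noteq> {}"
    using assms complement_nonempty by simp
  have R: "0 < I i + J_A"
    using I_pos_of_mem[OF i] J_A_pos[OF Ac] by simp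
  have "asym_le (\<lambda>x. expect_time PA (hat_time_lt K l u (fa x) (fb x) (fc x) (fd x) lam i))
      (\<lambda>x. ereal (fa x / (I i + J_A))) F"
  proof (rule asym_le_rescale[OF asym_le_min[OF asym_le_hat_time_lt_in[OF i fa]
        asym_le_hat_time_lt_in_lower[OF i True Ac fc], folded ereal_min]])
    fix \<eta> :: real
    assume "0 < \<eta>"
    from eventually_le_mult_of_ratio[OF ac fc this]
    show "eventually (\<lambda>x. min (fa x / I i) (fc x / (I i + J_A)) \<le> (1 + \<eta>) * (fa x / (I i + J_A))) F"
      by eventually_elim (rule min_divide_le_scaled[OF R])
  next
    have "eventually (\<lambda>x. 0 \<le> fa x) F"
      using fa unfolding filterlim_at_top by auto
    then show "eventually (\<lambda>x. 0 \<le> fa x / (I i + J_A)) F"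
      by eventually_elim (use R in simp)
  qed
  with True R show ?thesis
    unfolding min_over_J_eq[OF Ac] by (simp add: ereal_divide_pos del: ereal_divide)
next
  case False
  with asym_le_hat_time_lt_in[OF i fa] I_pos_of_mem[OF i] show ?thesis
    by (simp add: ereal_divide_pos del: ereal_divide)
qed

lemma hat_time_lt_out_bound_proportional:
  assumes "l < u" and j: "j \<in> {1..K} - A"
    and fb: "filterlim fb at_top F" and fd: "filterlim fd at_top F"
    and bd: "((\<lambda>x. fb x / fd x) \<longlongrightarrow> 1) F"
  shows "asym_le (\<lambda>x. expect_time PA (hat_time_lt K l u (fa x) (fb x) (fc x) (fd x) lam j))
    (\<lambda>x. ereal (fb x) / (ereal (J j) + (if card A = u then min_over I A else 0))) F"
proof (cases "card A = u")
  case True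
  then have An: "A \<noteq> {}"
    using \<open>l < u\<close> by auto
  have R: "0 < J j + I_A"
    using J_pos[of j] j I_A_pos[OF An] by simp
  have "asym_le (\<lambda>x. expect_time PA (hat_time_lt K l u (fa x) (fb x) (fc x) (fd x) lam j))
      (\<lambda>x. ereal (fb x / (J j + I_A))) F"
  proof (rule asym_le_rescale[OF asym_le_min[OF asym_le_hat_time_lt_out[OF j fb]
        asym_le_hat_time_lt_out_upper[OF j True An fd], folded ereal_min]])
    fix \<eta> :: real
    assume "0 < \<eta>"
    from eventually_le_mult_of_ratio[OF bd fd this]
    show "eventually (\<lambda>x. min (fb x / J j) (fd x / (J j + I_A)) \<le> (1 + \<eta>) * (fb x / (J j + I_A))) F"
      by eventually_elim (rule min_divide_le_scaled[OF R])
  next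
    have "eventually (\<lambda>x. 0 \<le> fb x) F"
      using fb unfolding filterlim_at_top by auto
    then show "eventually (\<lambda>x. 0 \<le> fb x / (J j + I_A)) F"
      by eventually_elim (use R in simp)
  qed
  with True R show ?thesis
    unfolding min_over_I_eq[OF An] by (simp add: ereal_divide_pos del: ereal_divide)
next
  case False
  with asym_le_hat_time_lt_out[OF j fb] J_pos[of j] j show ?thesis
    by (simp add: ereal_divide_pos del: ereal_divide)
qed

lemma check_time_lt_bound_proportional:
  assumes lu: "l \<le> card A" "card A \<le> u" "l < u" "u \<le> K"
    and fa: "filterlim fa at_top F" and fb: "filterlim fb at_top F"
    and fc: "filterlim fc at_top F" and fd: "filterlim fd at_top F"
    and ac: "((\<lambda>x. fa x / fc x) \<longlongrightarrow> 1) F" and bd: "((\<lambda>x. fb x / fd x) \<longlongrightarrow> 1) F"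
  shows "asym_le (\<lambda>x. expect_time PA (check_time_lt K l u (fa x) (fb x) (fc x) (fd x) lam))
    (\<lambda>x. max (ereal (fa x) / (min_over I A + (if card A = l then min_over J ({1..K} - A) else 0)))
              (ereal (fb x) / (min_over J ({1..K} - A) + (if card A = u then min_over I A else 0)))) F"
proof -
  have nonneg: "eventually (\<lambda>x. 0 \<le> fa x \<and> 0 \<le> fb x) F"
    using fa fb unfolding filterlim_at_top by (intro eventually_conj) auto
  from lu show ?thesis
  proof (cases rule: card_A_cases)
    case empty
    have "min_over I A = \<infinity>"
      using empty(1) by (simp add: min_over_def)
    with empty(2) lu(3) J_A_pos[OF empty(3)] show ?thesis
      unfolding min_over_J_eq[OF empty(3)]
      by (intro asym_le_cong[OF asym_le_check_time_lt_empty[OF lu(1,2) empty(1) fb] nonneg])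
        (auto simp: max_def divide_le_0_iff)
  next
    case lower
    with I_A_pos J_A_pos lu asym_le_check_time_lt_lower_proportional[OF lower(1) _ lower(2,3) fa fb fc ac]
    show ?thesis
      unfolding min_over_I_eq[OF lower(2)] min_over_J_eq[OF lower(3)]
      by (simp add: ereal_divide_pos del: ereal_divide)
  next
    case mid
    with I_A_pos J_A_pos asym_le_check_time_lt_signs[OF lu(1,2) mid(3,4) fa fb] show ?thesis
      unfolding min_over_I_eq[OF mid(3)] min_over_J_eq[OF mid(4)]
      by (simp add: ereal_divide_pos del: ereal_divide)
  next
    case full
    have "min_over J ({1..K} - A) = \<infinity>"
      using full(4) by (simp add: min_over_def)
    with full(1,2) I_A_pos[OF full(3)] show ?thesis
      unfolding min_over_I_eq[OF full(3)]
      by (intro asym_le_cong[OF asym_le_check_time_lt_full[OF lu(1,2) full(4) fa] nonneg])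
        (auto simp: max_def divide_le_0_iff)
  next
    case upper
    with I_A_pos J_A_pos lu asym_le_check_time_lt_upper_proportional[OF upper(1) _ upper(3,4) fa fb fd bd]
    show ?thesis
      unfolding min_over_I_eq[OF upper(3)] min_over_J_eq[OF upper(4)]
      by (simp add: ereal_divide_pos add.commute del: ereal_divide)
  qed
qed

lemma sprt_time_bounds:
  "(\<forall>i\<in>A. asym_le (\<lambda>(a, b). expect_time PA (sprt_time lam a b i))
      (\<lambda>(a, b). ereal a / ereal (I i)) (at_top \<times>\<^sub>F at_top)) \<and>
   (\<forall>j\<in>{1..K} - A. asym_le (\<lambda>(a, b). expect_time PA (sprt_time lam a b j))
      (\<lambda>(a, b). ereal b / ereal (J j)) (at_top \<times>\<^sub>F at_top))"
  unfolding case_prod_beta'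
proof (intro conjI ballI)
  fix i
  assume i: "i \<in> A"
  then have "0 < I i"
    by (rule I_pos_of_mem)
  with asym_le_sprt_time_in[OF i filterlim_fst]
  show "asym_le (\<lambda>x. expect_time PA (sprt_time lam (fst x) (snd x) i))
      (\<lambda>x. ereal (fst x) / ereal (I i)) (at_top \<times>\<^sub>F at_top)"
    by simp
next
  fix j
  assume j: "j \<in> {1..K} - A"
  then have "0 < J j"
    using J_pos by auto
  with asym_le_sprt_time_out[OF j filterlim_snd]
  show "asym_le (\<lambda>x. expect_time PA (sprt_time lam (fst x) (snd x) j))
      (\<lambda>x. ereal (snd x) / ereal (J j)) (at_top \<times>\<^sub>F at_top)"
    by simp
qed

lemma eq_case_bounds:
  assumes m: "card A = m" "0 < m" "m < K"
  shows "(\<forall>i\<in>A. asym_le (\<lambda>(c, d). expect_time PA (hat_time_eq K m c d lam i))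
            (\<lambda>(c, d). ereal c / (ereal (I i) + min_over J ({1..K} - A))) (at_top \<times>\<^sub>F at_top)) \<and>
         (\<forall>j\<in>{1..K} - A. asym_le (\<lambda>(c, d). expect_time PA (hat_time_eq K m c d lam j))
            (\<lambda>(c, d). ereal d / (ereal (J j) + min_over I A)) (at_top \<times>\<^sub>F at_top)) \<and>
         asym_le (\<lambda>(c, d). expect_time PA (check_time_eq K m c d lam))
            (\<lambda>(c, d). ereal (max c d) / (min_over I A + min_over J ({1..K} - A))) (at_top \<times>\<^sub>F at_top)"
proof -
  have An: "A \<noteq> {}" and Ac: "{1..K} - A \<noteq> {}"
    using m complement_nonempty by auto
  have "0 < I i + J_A" if "i \<in> A" for i
    using I_pos_of_mem[OF that] J_A_pos[OF Ac] by simp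
  moreover have "0 < J j + I_A" if "j \<in> {1..K} - A" for j
    using that J_pos[of j] I_A_pos[OF An] by simp
  moreover have "0 < I_A + J_A"
    using I_A_pos[OF An] J_A_pos[OF Ac] by simp
  ultimately show ?thesis
    unfolding case_prod_beta' m(1)[symmetric] min_over_I_eq[OF An] min_over_J_eq[OF Ac]
    using asym_le_hat_time_eq_in[OF _ Ac filterlim_fst, where fd = snd]
      asym_le_hat_time_eq_out[OF _ An filterlim_snd, where fc = fst]
      asym_le_check_time_eq[OF An Ac filterlim_fst filterlim_snd]
    by (auto simp add: ereal_divide_pos simp del: ereal_max ereal_divide)
qed

lemma lt_case_bounds:
  assumes "l \<le> card A" "card A \<le> u" "l < u" "u \<le> K"
  shows "(\<forall>i\<in>A. asym_le
            (\<lambda>(a, b, c, d). expect_time PA (hat_time_lt K l u a b c d lam i))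
            (\<lambda>(a, b, c, d). if card A = l
                then min (ereal a / ereal (I i)) (ereal c / (ereal (I i) + min_over J ({1..K} - A)))
                else ereal a / ereal (I i))
            (at_top \<times>\<^sub>F (at_top \<times>\<^sub>F (at_top \<times>\<^sub>F at_top)))) \<and>
         (\<forall>j\<in>{1..K} - A. asym_le
            (\<lambda>(a, b, c, d). expect_time PA (hat_time_lt K l u a b c d lam j))
            (\<lambda>(a, b, c, d). if card A = u
                then min (ereal b / ereal (J j)) (ereal d / (ereal (J j) + min_over I A))
                else ereal b / ereal (J j))
            (at_top \<times>\<^sub>F (at_top \<times>\<^sub>F (at_top \<times>\<^sub>F at_top)))) \<and>
         asym_le
            (\<lambda>(a, b, c, d). expect_time PA (check_time_lt K l u a b c d lam))
            (\<lambda>(a, b, c, d).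
               if card A = l then
                 max (ereal b / min_over J ({1..K} - A))
                     (min (ereal a / min_over I A)
                          (ereal c / (min_over I A + min_over J ({1..K} - A))))
               else if card A < u then
                 max (ereal a / min_over I A) (ereal b / min_over J ({1..K} - A))
               else
                 max (ereal a / min_over I A)
                     (min (ereal b / min_over J ({1..K} - A))
                          (ereal d / (min_over J ({1..K} - A) + min_over I A))))
            (at_top \<times>\<^sub>F (at_top \<times>\<^sub>F (at_top \<times>\<^sub>F at_top)))"
proof -
  let ?F = "at_top \<times>\<^sub>F (at_top \<times>\<^sub>F (at_top \<times>\<^sub>F at_top)) :: (real \<times> real \<times> real \<times> real) filter"
  have b: "filterlim (\<lambda>x. fst (snd x)) at_top ?F"
    by (rule filterlim_compose[OF filterlim_fst filterlim_snd])
  have c: "filterlim (\<lambda>x. fst (snd (snd x))) at_top ?F"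
    by (rule filterlim_compose[OF filterlim_compose[OF filterlim_fst filterlim_snd] filterlim_snd])
  have d: "filterlim (\<lambda>x. snd (snd (snd x))) at_top ?F"
    by (rule filterlim_compose[OF filterlim_snd filterlim_compose[OF filterlim_snd filterlim_snd]])
  show ?thesis
    unfolding case_prod_beta'
    using hat_time_lt_in_bound[OF assms(3,4) _ filterlim_fst c, where fb = "\<lambda>x. fst (snd x)" and fd = "\<lambda>x. snd (snd (snd x))"]
      hat_time_lt_out_bound[OF assms(3) _ b d, where fa = fst and fc = "\<lambda>x. fst (snd (snd x))"]
      check_time_lt_bound[OF assms filterlim_fst b c d]
    by blast
qed

lemma lt_case_bounds_proportional:
  assumes "l \<le> card A" "card A \<le> u" "l < u" "u \<le> K"
  shows "\<forall>(F :: 'x filter) (fa :: 'x \<Rightarrow> real) fb fc fd.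
            filterlim fa at_top F \<and> filterlim fb at_top F \<and>
            filterlim fc at_top F \<and> filterlim fd at_top F \<and>
            ((\<lambda>x. fa x / fc x) \<longlongrightarrow> 1) F \<and> ((\<lambda>x. fb x / fd x) \<longlongrightarrow> 1) F \<longrightarrow>
            (\<forall>i\<in>A. asym_le
               (\<lambda>x. expect_time PA (hat_time_lt K l u (fa x) (fb x) (fc x) (fd x) lam i))
               (\<lambda>x. ereal (fa x) /
                      (ereal (I i) + (if card A = l then min_over J ({1..K} - A) else 0)))
               F) \<and>
            (\<forall>j\<in>{1..K} - A. asym_le
               (\<lambda>x. expect_time PA (hat_time_lt K l u (fa x) (fb x) (fc x) (fd x) lam j))
               (\<lambda>x. ereal (fb x) /
                      (ereal (J j) + (if card A = u then min_over I A else 0)))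
               F) \<and>
            asym_le
               (\<lambda>x. expect_time PA (check_time_lt K l u (fa x) (fb x) (fc x) (fd x) lam))
               (\<lambda>x. max
                  (ereal (fa x) / (min_over I A +
                      (if card A = l then min_over J ({1..K} - A) else 0)))
                  (ereal (fb x) / (min_over J ({1..K} - A) +
                      (if card A = u then min_over I A else 0))))
               F"
  using hat_time_lt_in_bound_proportional[OF assms(3,4)] hat_time_lt_out_bound_proportional[OF assms(3)]
    check_time_lt_bound_proportional[OF assms]
  by blast

end

theorem proposition4p2:
  fixes K :: nat
    and M :: "nat \<Rightarrow> 'a measure"
    and P0 P1 :: "nat \<Rightarrow> (nat \<Rightarrow> 'a) measure"
    and lam :: "nat \<Rightarrow> nat \<Rightarrow> (nat \<Rightarrow> 'a) \<Rightarrow> real"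
    and I J :: "nat \<Rightarrow> real"
    and A :: "nat set"
    and l u :: nat
  assumes K_pos: "K \<ge> 1"
    and P0_prob: "\<And>k. k \<in> {1..K} \<Longrightarrow> prob_space (P0 k)"
    and P1_prob: "\<And>k. k \<in> {1..K} \<Longrightarrow> prob_space (P1 k)"
    and P0_sets: "\<And>k. k \<in> {1..K} \<Longrightarrow> sets (P0 k) = sets (path_space (M k))"
    and P1_sets: "\<And>k. k \<in> {1..K} \<Longrightarrow> sets (P1 k) = sets (path_space (M k))"
    and llr: "\<And>k. k \<in> {1..K} \<Longrightarrow> is_llr (M k) (P0 k) (P1 k) (lam k)"
    and I_pos: "\<And>k. k \<in> {1..K} \<Longrightarrow> I k > 0"
    and J_pos: "\<And>k. k \<in> {1..K} \<Longrightarrow> J k > 0"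
    and I_compl: "\<And>k \<epsilon>. k \<in> {1..K} \<Longrightarrow> \<epsilon> > 0 \<Longrightarrow>
        summable (\<lambda>n. measure (P1 k)
          {\<omega> \<in> space (P1 k). lam k (Suc n) \<omega> / real (Suc n) \<le> I k - \<epsilon>})"
    and J_compl: "\<And>k \<epsilon>. k \<in> {1..K} \<Longrightarrow> \<epsilon> > 0 \<Longrightarrow>
        summable (\<lambda>n. measure (P0 k)
          {\<omega> \<in> space (P0 k). - lam k (Suc n) \<omega> / real (Suc n) \<le> J k - \<epsilon>})"
    and A_sub: "A \<subseteq> {1..K}"
  shows
   "(\<forall>i\<in>A. asym_le
        (\<lambda>(a, b). expect_time (joint_law K P0 P1 A) (sprt_time lam a b i))
        (\<lambda>(a, b). ereal a / ereal (I i))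
        (at_top \<times>\<^sub>F at_top)) \<and>
    (\<forall>j\<in>{1..K} - A. asym_le
        (\<lambda>(a, b). expect_time (joint_law K P0 P1 A) (sprt_time lam a b j))
        (\<lambda>(a, b). ereal b / ereal (J j))
        (at_top \<times>\<^sub>F at_top)) \<and>
    ((l \<le> u \<and> u \<le> K \<and> 0 < u \<and> l < K \<and> l \<le> card A \<and> card A \<le> u) \<longrightarrow>
      ((l = u \<longrightarrow>
         (\<forall>i\<in>A. asym_le
            (\<lambda>(c, d). expect_time (joint_law K P0 P1 A) (hat_time_eq K l c d lam i))
            (\<lambda>(c, d). ereal c / (ereal (I i) + min_over J ({1..K} - A)))
            (at_top \<times>\<^sub>F at_top)) \<and>
         (\<forall>j\<in>{1..K} - A. asym_le
            (\<lambda>(c, d). expect_time (joint_law K P0 P1 A) (hat_time_eq K l c d lam j))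
            (\<lambda>(c, d). ereal d / (ereal (J j) + min_over I A))
            (at_top \<times>\<^sub>F at_top)) \<and>
         asym_le
            (\<lambda>(c, d). expect_time (joint_law K P0 P1 A) (check_time_eq K l c d lam))
            (\<lambda>(c, d). ereal (max c d) / (min_over I A + min_over J ({1..K} - A)))
            (at_top \<times>\<^sub>F at_top)) \<and>
       (l < u \<longrightarrow>
         (\<forall>i\<in>A. asym_le
            (\<lambda>(a, b, c, d). expect_time (joint_law K P0 P1 A) (hat_time_lt K l u a b c d lam i))
            (\<lambda>(a, b, c, d). if card A = l
                then min (ereal a / ereal (I i)) (ereal c / (ereal (I i) + min_over J ({1..K} - A)))
                else ereal a / ereal (I i))
            (at_top \<times>\<^sub>F (at_top \<times>\<^sub>F (at_top \<times>\<^sub>F at_top)))) \<and>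
         (\<forall>j\<in>{1..K} - A. asym_le
            (\<lambda>(a, b, c, d). expect_time (joint_law K P0 P1 A) (hat_time_lt K l u a b c d lam j))
            (\<lambda>(a, b, c, d). if card A = u
                then min (ereal b / ereal (J j)) (ereal d / (ereal (J j) + min_over I A))
                else ereal b / ereal (J j))
            (at_top \<times>\<^sub>F (at_top \<times>\<^sub>F (at_top \<times>\<^sub>F at_top)))) \<and>
         asym_le
            (\<lambda>(a, b, c, d). expect_time (joint_law K P0 P1 A) (check_time_lt K l u a b c d lam))
            (\<lambda>(a, b, c, d).
               if card A = l then
                 max (ereal b / min_over J ({1..K} - A))
                     (min (ereal a / min_over I A)
                          (ereal c / (min_over I A + min_over J ({1..K} - A))))
               else if card A < u then
                 max (ereal a / min_over I A) (ereal b / min_over J ({1..K} - A))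
               else
                 max (ereal a / min_over I A)
                     (min (ereal b / min_over J ({1..K} - A))
                          (ereal d / (min_over J ({1..K} - A) + min_over I A))))
            (at_top \<times>\<^sub>F (at_top \<times>\<^sub>F (at_top \<times>\<^sub>F at_top))) \<and>
         (\<forall>(F :: 'x filter) (fa :: 'x \<Rightarrow> real) fb fc fd.
            filterlim fa at_top F \<and> filterlim fb at_top F \<and>
            filterlim fc at_top F \<and> filterlim fd at_top F \<and>
            ((\<lambda>x. fa x / fc x) \<longlongrightarrow> 1) F \<and> ((\<lambda>x. fb x / fd x) \<longlongrightarrow> 1) F \<longrightarrow>
            (\<forall>i\<in>A. asym_le
               (\<lambda>x. expect_time (joint_law K P0 P1 A)
                      (hat_time_lt K l u (fa x) (fb x) (fc x) (fd x) lam i))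
               (\<lambda>x. ereal (fa x) /
                      (ereal (I i) + (if card A = l then min_over J ({1..K} - A) else 0)))
               F) \<and>
            (\<forall>j\<in>{1..K} - A. asym_le
               (\<lambda>x. expect_time (joint_law K P0 P1 A)
                      (hat_time_lt K l u (fa x) (fb x) (fc x) (fd x) lam j))
               (\<lambda>x. ereal (fb x) /
                      (ereal (J j) + (if card A = u then min_over I A else 0)))
               F) \<and>
            asym_le
               (\<lambda>x. expect_time (joint_law K P0 P1 A)
                      (check_time_lt K l u (fa x) (fb x) (fc x) (fd x) lam))
               (\<lambda>x. max
                  (ereal (fa x) / (min_over I A +
                      (if card A = l then min_over J ({1..K} - A) else 0)))
                  (ereal (fb x) / (min_over J ({1..K} - A) +
                      (if card A = u then min_over I A else 0))))
               F))))"
proof -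
  interpret llr_streams K M P0 P1 lam I J A
    by (rule llr_streams.intro) (fact assms)+
  show ?thesis
    using sprt_time_bounds eq_case_bounds[of l] lt_case_bounds[of l u]
      lt_case_bounds_proportional[of l u] le_antisym[of l "card A"]
    by blast
qed

end
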